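(* Let $\varepsilon>0$, $\theta_0>0$, $\Delta t>0$, $N\in\mathbb{N}$, $h=L/N$, and assume the mobility is constant, $\mathcal{M}\equiv1$. Consider the scheme: given $\phi^n\in\mathcal{C}_{\rm per}$, find $\phi^{n+1},\mu^{n+1}\in\mathcal{C}_{\rm per}$ with $$\frac{\phi^{n+1}-\phi^n}{\Delta t}=\Delta_h\mu^{n+1},\qquad \mu^{n+1}=\ln(1+\phi^{n+1})-\ln(1-\phi^{n+1})-\theta_0\phi^n-\varepsilon^2\Delta_h\phi^{n+1}.$$ Given $\phi^n\in\mathcal{C}_{\rm per}$ with $\|\phi^n\|_\infty\le M$ for some $M>0$ and $|\overline{\phi^n}|<1$, there exists a unique solution $\phi^{n+1}\in\mathcal{C}_{\rm per}$ of this scheme with $\phi^{n+1}-\overline{\phi^n}\in\mathring{\mathcal{C}}_{\rm per}$ and $\|\phi^{n+1}\|_\infty<1$.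
   Context: $\Omega=(0,L)^3$, periodic. Grid points $p_i=(i-\tfrac12)h$, $h=L/N$. $\mathcal{C}_{\rm per}$ is the space of real $N$-periodic grid functions $\nu_{i,j,k}$ on cell centers $(p_i,p_j,p_k)$. Inner product $\langle\nu,\xi\rangle=h^3\sum_{i,j,k=1}^N\nu_{i,j,k}\xi_{i,j,k}$; mean $\overline{\nu}=|\Omega|^{-1}\langle\nu,1\rangle$; $\mathring{\mathcal{C}}_{\rm per}=\{\nu\in\mathcal{C}_{\rm per}:\overline{\nu}=0\}$. $\Delta_h\nu_{i,j,k}=h^{-2}(\nu_{i+1,j,k}+\nu_{i-1,j,k}+\nu_{i,j+1,k}+\nu_{i,j-1,k}+\nu_{i,j,k+1}+\nu_{i,j,k-1}-6\nu_{i,j,k})$. $\|\nu\|_\infty=\max_{i,j,k}|\nu_{i,j,k}|$. Logarithms are applied pointwise. *)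

theory Defs
  imports Complex_Main
begin

text \<open>Grid functions on cell centres, indexed by integer triples; the space C_per
consists of those that are N-periodic in each index. The fundamental cell is {1..N}^3.\<close>

type_synonym grid = "int \<Rightarrow> int \<Rightarrow> int \<Rightarrow> real"

definition Cper :: "nat \<Rightarrow> grid set" where
  "Cper N = {\<nu>. \<forall>i j k. \<nu> (i + int N) j k = \<nu> i j k \<and> \<nu> i (j + int N) k = \<nu> i j k
                          \<and> \<nu> i j (k + int N) = \<nu> i j k}"

definition cells :: "nat \<Rightarrow> (int \<times> int \<times> int) set" where
  "cells N = {1..int N} \<times> {1..int N} \<times> {1..int N}"

definition gridh :: "nat \<Rightarrow> real \<Rightarrow> real" where
  "gridh N L = L / real N"

definition ip :: "nat \<Rightarrow> real \<Rightarrow> grid \<Rightarrow> grid \<Rightarrow> real" where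
  "ip N L \<nu> \<xi> = (gridh N L)^3 * (\<Sum>(i,j,k)\<in>cells N. \<nu> i j k * \<xi> i j k)"

definition gmean :: "nat \<Rightarrow> real \<Rightarrow> grid \<Rightarrow> real" where
  "gmean N L \<nu> = ip N L \<nu> (\<lambda>_ _ _. 1) / L^3"

definition Cper0 :: "nat \<Rightarrow> real \<Rightarrow> grid set" where
  "Cper0 N L = {\<nu> \<in> Cper N. gmean N L \<nu> = 0}"

definition lap :: "nat \<Rightarrow> real \<Rightarrow> grid \<Rightarrow> grid" where
  "lap N L \<nu> = (\<lambda>i j k. (\<nu> (i+1) j k + \<nu> (i-1) j k + \<nu> i (j+1) k + \<nu> i (j-1) k
       + \<nu> i j (k+1) + \<nu> i j (k-1) - 6 * \<nu> i j k) / (gridh N L)^2)"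

definition supnorm :: "nat \<Rightarrow> grid \<Rightarrow> real" where
  "supnorm N \<nu> = Max ((\<lambda>(i,j,k). \<bar>\<nu> i j k\<bar>) ` cells N)"

definition scheme :: "nat \<Rightarrow> real \<Rightarrow> real \<Rightarrow> real \<Rightarrow> real \<Rightarrow> grid \<Rightarrow> grid \<Rightarrow> grid \<Rightarrow> bool" where
  "scheme N L \<epsilon> \<theta>\<^sub>0 dt \<phi>0 \<phi>1 \<mu>1 \<longleftrightarrow>
     (\<forall>i j k. (\<phi>1 i j k - \<phi>0 i j k) / dt = lap N L \<mu>1 i j k) \<and>
     (\<forall>i j k. \<mu>1 i j k = ln (1 + \<phi>1 i j k) - ln (1 - \<phi>1 i j k) - \<theta>\<^sub>0 * \<phi>0 i j k
                        - \<epsilon>^2 * lap N L \<phi>1 i j k)"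

end

(*
  Write phi^(n+1) = phi^n + dt Lap_h u.  The scheme is then the Euler-Lagrange equation, in u,
  of the convex functional

    K(u) = sum F(psi) - theta0 <phi^n, psi> - eps^2/2 <psi, Lap_h psi> - dt/2 <u, Lap_h u>,
    psi = phi^n + dt Lap_h u,   F(x) = (1+x) ln(1+x) + (1-x) ln(1-x),

  on the set where |psi| <= 1, and mu^(n+1) - u is constant.  K is invariant under adding
  constants to u and, by the discrete energy identity, controls the discrete gradient of u, so it
  attains its minimum; the admissible set is nonempty because the mean of phi^n lies in (-1,1).
  A minimizer cannot touch +-1: pushing the saturated cells inwards lowers the entropy at the
  rate t ln t of the logarithmic singularity, while all other terms change only linearly in t.
  At the interior minimizer stationarity gives Lap_h mu = Lap_h u, i.e. the scheme.  Uniqueness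
  follows from the strict monotonicity of F' and the negativity of <v, Lap_h v>.
*)
theory Submission
  imports Defs "HOL-Analysis.Analysis" "HOL-Real_Asymp.Real_Asymp"
begin

section \<open>Periodic grid functions and cell sums\<close>

definition csum :: "nat \<Rightarrow> grid \<Rightarrow> real" where
  "csum N f = (\<Sum>(i,j,k)\<in>cells N. f i j k)"

lemma finite_cells: "finite (cells N)"
  unfolding cells_def by simp

lemma card_cells: "card (cells N) = N ^ 3"
  unfolding cells_def by (simp add: card_cartesian_product power3_eq_cube)

lemma csum_nested: "csum N f = (\<Sum>i\<in>{1..int N}. \<Sum>j\<in>{1..int N}. \<Sum>k\<in>{1..int N}. f i j k)"
  unfolding csum_def cells_def by (simp add: sum.cartesian_product)

lemma csum_add: "csum N (\<lambda>i j k. f i j k + g i j k) = csum N f + csum N g"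
  unfolding csum_def by (simp add: sum.distrib split_def)

lemma csum_diff: "csum N (\<lambda>i j k. f i j k - g i j k) = csum N f - csum N g"
  unfolding csum_def by (simp add: sum_subtractf split_def)

lemma csum_cmult: "csum N (\<lambda>i j k. c * f i j k) = c * csum N f"
  unfolding csum_def by (simp add: sum_distrib_left split_def)

lemma csum_uminus: "csum N (\<lambda>i j k. - f i j k) = - csum N f"
  unfolding csum_def by (simp add: sum_negf split_def)

lemma csum_divide: "csum N (\<lambda>i j k. f i j k / c) = csum N f / c"
  unfolding csum_def by (simp add: sum_divide_distrib split_def)

lemma csum_const: "csum N (\<lambda>i j k. c) = real N ^ 3 * c"
  unfolding csum_def by (simp add: split_def card_cells)

lemma csum_cong: "(\<And>i j k. (i,j,k) \<in> cells N \<Longrightarrow> f i j k = g i j k) \<Longrightarrow> csum N f = csum N g"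
  unfolding csum_def by (intro sum.cong) auto

lemma csum_mono: "(\<And>i j k. (i,j,k) \<in> cells N \<Longrightarrow> f i j k \<le> g i j k) \<Longrightarrow> csum N f \<le> csum N g"
  unfolding csum_def by (intro sum_mono) auto

lemma csum_nonneg: "(\<And>i j k. (i,j,k) \<in> cells N \<Longrightarrow> 0 \<le> f i j k) \<Longrightarrow> 0 \<le> csum N f"
  unfolding csum_def by (intro sum_nonneg) auto

lemma member_le_csum:
  assumes "\<And>i j k. (i,j,k) \<in> cells N \<Longrightarrow> 0 \<le> f i j k" and "(i,j,k) \<in> cells N"
  shows "f i j k \<le> csum N f"
proof -
  have "(\<lambda>(i,j,k). f i j k) (i,j,k) \<le> (\<Sum>p\<in>cells N. (\<lambda>(i,j,k). f i j k) p)"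
    by (rule member_le_sum) (use assms finite_cells in auto)
  then show ?thesis unfolding csum_def by simp
qed

lemma csum_sq_eq_0_imp:
  assumes "csum N (\<lambda>i j k. (v i j k)^2) = 0" and "(i,j,k) \<in> cells N"
  shows "v i j k = 0"
  using member_le_csum[of N "\<lambda>i j k. (v i j k)^2", OF _ assms(2)] assms(1) by simp

lemma abs_csum_mult_le:
  assumes "\<And>i j k. (i,j,k) \<in> cells N \<Longrightarrow> \<bar>u i j k\<bar> \<le> M"
  shows "\<bar>csum N (\<lambda>i j k. f i j k * u i j k)\<bar> \<le> csum N (\<lambda>i j k. \<bar>f i j k\<bar>) * M"
proof -
  have "\<bar>csum N (\<lambda>i j k. f i j k * u i j k)\<bar> \<le> csum N (\<lambda>i j k. \<bar>f i j k * u i j k\<bar>)"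
    unfolding csum_def by (rule order_trans[OF sum_abs]) (simp add: split_def)
  also have "\<dots> \<le> csum N (\<lambda>i j k. \<bar>f i j k\<bar> * M)"
    by (rule csum_mono) (simp add: abs_mult assms mult_left_mono)
  finally show ?thesis
    by (simp add: csum_cmult[of N M, symmetric] mult.commute)
qed

lemma csum_quadratic:
  "csum N (\<lambda>i j k. (u i j k + t * v i j k) * (a i j k + t * b i j k)) =
   csum N (\<lambda>i j k. u i j k * a i j k)
   + t * (csum N (\<lambda>i j k. u i j k * b i j k) + csum N (\<lambda>i j k. v i j k * a i j k))
   + t^2 * csum N (\<lambda>i j k. v i j k * b i j k)"
proof -
  have "csum N (\<lambda>i j k. (u i j k + t * v i j k) * (a i j k + t * b i j k)) =
     csum N (\<lambda>i j k. u i j k * a i j k + t * (u i j k * b i j k + v i j k * a i j k)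
                      + t^2 * (v i j k * b i j k))"
    by (rule csum_cong) (simp add: algebra_simps power2_eq_square)
  then show ?thesis by (simp only: csum_add csum_cmult)
qed

lemma csum_linear:
  "csum N (\<lambda>i j k. f i j k * (u i j k + t * v i j k)) =
   csum N (\<lambda>i j k. f i j k * u i j k) + t * csum N (\<lambda>i j k. f i j k * v i j k)"
proof -
  have "csum N (\<lambda>i j k. f i j k * (u i j k + t * v i j k)) =
     csum N (\<lambda>i j k. f i j k * u i j k + t * (f i j k * v i j k))"
    by (rule csum_cong) (simp add: algebra_simps)
  then show ?thesis by (simp only: csum_add csum_cmult)
qed

lemma csum_tendsto:
  assumes "\<And>i j k. (i,j,k) \<in> cells N \<Longrightarrow> (\<lambda>n. F n i j k) \<longlonglongrightarrow> G i j k"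
  shows "(\<lambda>n. csum N (F n)) \<longlonglongrightarrow> csum N G"
  unfolding csum_def by (rule tendsto_sum) (use assms in auto)

lemma periodic_add_mult:
  fixes g :: "int \<Rightarrow> 'a"
  assumes "\<And>x. g (x + int N) = g x"
  shows "g (x + int N * q) = g x"
proof -
  have nat: "g (y + int N * int n) = g y" for y n
  proof (induction n)
    case (Suc n)
    have "g (y + int N * int (Suc n)) = g ((y + int N * int n) + int N)"
      by (simp add: algebra_simps)
    then show ?case using Suc assms by simp
  qed simp
  show ?thesis
  proof (cases "q \<ge> 0")
    case True
    then show ?thesis using nat[of x "nat q"] by simp
  next
    case False
    then show ?thesis using nat[of "x + int N * q" "nat (- q)"] by simp
  qed
qed

definition cell_rep :: "nat \<Rightarrow> int \<Rightarrow> int" where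
  "cell_rep N i = (i - 1) mod int N + 1"

lemma cell_rep_in: "N > 0 \<Longrightarrow> cell_rep N i \<in> {1..int N}"
  unfolding cell_rep_def by (simp add: pos_mod_bound pos_mod_sign less_le_trans[of 0] add1_zle_eq)

lemma cell_rep_cells: "N > 0 \<Longrightarrow> (cell_rep N i, cell_rep N j, cell_rep N k) \<in> cells N"
  using cell_rep_in unfolding cells_def by auto

lemma cells_nonempty: "N > 0 \<Longrightarrow> cells N \<noteq> {}"
  using cell_rep_cells by blast

lemma cell_rep_add_period: "cell_rep N (i + int N) = cell_rep N i"
  unfolding cell_rep_def by (simp add: diff_add_eq[symmetric])

lemma periodic_cell_rep:
  fixes g :: "int \<Rightarrow> 'a"
  assumes "\<And>x. g (x + int N) = g x"
  shows "g (cell_rep N i) = g i"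
proof -
  have "i = cell_rep N i + int N * ((i - 1) div int N)"
    unfolding cell_rep_def using mod_mult_div_eq[of "i - 1" "int N"] by linarith
  then show ?thesis using periodic_add_mult[of g, OF assms] by metis
qed

lemma inj_on_cell_rep_shift: "inj_on (\<lambda>i. cell_rep N (i + a)) {1..int N}"
proof (rule inj_onI)
  fix i j assume ij: "i \<in> {1..int N}" "j \<in> {1..int N}" "cell_rep N (i + a) = cell_rep N (j + a)"
  then have "int N dvd (i + a - 1) - (j + a - 1)"
    unfolding cell_rep_def by (simp add: mod_eq_dvd_iff)
  then have "int N dvd i - j" by simp
  moreover have "\<bar>i - j\<bar> < int N" using ij(1,2) by auto
  ultimately show "i = j" using dvd_imp_le_int[of "i - j" "int N"] by fastforce
qed

lemma sum_periodic_shift: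
  fixes g :: "int \<Rightarrow> 'a::comm_monoid_add"
  assumes "\<And>x. g (x + int N) = g x"
  shows "(\<Sum>i\<in>{1..int N}. g (i + a)) = (\<Sum>i\<in>{1..int N}. g i)"
proof (cases "N = 0")
  case False
  let ?\<sigma> = "\<lambda>i. cell_rep N (i + a)"
  have image: "?\<sigma> ` {1..int N} = {1..int N}"
    by (rule endo_inj_surj) (use inj_on_cell_rep_shift cell_rep_in False in auto)
  have "(\<Sum>i\<in>{1..int N}. g (i + a)) = (\<Sum>i\<in>{1..int N}. g (?\<sigma> i))"
    using periodic_cell_rep[of g, OF assms] by simp
  also have "\<dots> = (\<Sum>i\<in>?\<sigma> ` {1..int N}. g i)"
    by (rule sum.reindex[symmetric, unfolded comp_def]) (rule inj_on_cell_rep_shift)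
  finally show ?thesis unfolding image .
qed simp

lemma Cper_periodic:
  assumes "u \<in> Cper N"
  shows "u (i + int N) j k = u i j k" "u i (j + int N) k = u i j k" "u i j (k + int N) = u i j k"
  using assms unfolding Cper_def by auto

lemma Cper_cell_rep:
  assumes "u \<in> Cper N"
  shows "u (cell_rep N i) (cell_rep N j) (cell_rep N k) = u i j k"
  using periodic_cell_rep[of "\<lambda>i. u i _ _"] periodic_cell_rep[of "\<lambda>j. u _ j _"]
    periodic_cell_rep[of "\<lambda>k. u _ _ k"] Cper_periodic[OF assms] by metis

lemma Cper_eqI:
  assumes "u \<in> Cper N" "v \<in> Cper N" "N > 0" "\<And>i j k. (i,j,k) \<in> cells N \<Longrightarrow> u i j k = v i j k"
  shows "u = v"
proof (intro ext)
  fix i j k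
  show "u i j k = v i j k"
    using Cper_cell_rep[OF assms(1), of i j k] Cper_cell_rep[OF assms(2), of i j k]
      assms(4)[OF cell_rep_cells[OF assms(3)]] by simp
qed

lemma Cper_const: "(\<lambda>i j k. c) \<in> Cper N"
  unfolding Cper_def by auto

lemma Cper_comp: "u \<in> Cper N \<Longrightarrow> (\<lambda>i j k. f (u i j k)) \<in> Cper N"
  unfolding Cper_def by auto

lemma Cper_comp2: "u \<in> Cper N \<Longrightarrow> v \<in> Cper N \<Longrightarrow> (\<lambda>i j k. f (u i j k) (v i j k)) \<in> Cper N"
  unfolding Cper_def by auto

lemma Cper_add_scaled: "u \<in> Cper N \<Longrightarrow> v \<in> Cper N \<Longrightarrow> (\<lambda>i j k. u i j k + t * v i j k) \<in> Cper N"
  unfolding Cper_def by auto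

lemma Cper_shift:
  assumes "u \<in> Cper N"
  shows "(\<lambda>i j k. u (i + p) (j + q) (k + r)) \<in> Cper N"
  using Cper_periodic[OF assms, of "_ + p" "_ + q" "_ + r"] unfolding Cper_def by (simp add: algebra_simps)

lemma csum_shift:
  assumes "f \<in> Cper N"
  shows "csum N (\<lambda>i j k. f (i + a) (j + b) (k + c)) = csum N f"
proof -
  note per = Cper_periodic[OF assms]
  have "csum N (\<lambda>i j k. f (i + a) (j + b) (k + c)) =
     (\<Sum>i\<in>{1..int N}. \<Sum>j\<in>{1..int N}. \<Sum>k\<in>{1..int N}. f (i + a) (j + b) k)"
    unfolding csum_nested by (intro sum.cong refl sum_periodic_shift) (simp add: per)
  also have "\<dots> = (\<Sum>i\<in>{1..int N}. \<Sum>j\<in>{1..int N}. \<Sum>k\<in>{1..int N}. f (i + a) j k)"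
    by (intro sum.cong refl sum_periodic_shift[of "\<lambda>j. \<Sum>k\<in>{1..int N}. f _ j k"]) (simp add: per)
  also have "\<dots> = csum N f"
    unfolding csum_nested
    by (intro sum_periodic_shift[of "\<lambda>i. \<Sum>j\<in>{1..int N}. \<Sum>k\<in>{1..int N}. f i j k"]) (simp add: per)
  finally show ?thesis .
qed

section \<open>The discrete Laplacian and summation by parts\<close>

lemma lap_Cper:
  assumes "u \<in> Cper N"
  shows "lap N L u \<in> Cper N"
proof -
  have "(\<lambda>i j k. u (i + 1) j k) \<in> Cper N" "(\<lambda>i j k. u (i - 1) j k) \<in> Cper N"
    "(\<lambda>i j k. u i (j + 1) k) \<in> Cper N" "(\<lambda>i j k. u i (j - 1) k) \<in> Cper N"
    "(\<lambda>i j k. u i j (k + 1)) \<in> Cper N" "(\<lambda>i j k. u i j (k - 1)) \<in> Cper N"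
    using Cper_shift[OF assms, of 1 0 0] Cper_shift[OF assms, of "-1" 0 0] Cper_shift[OF assms, of 0 1 0]
      Cper_shift[OF assms, of 0 "-1" 0] Cper_shift[OF assms, of 0 0 1] Cper_shift[OF assms, of 0 0 "-1"]
    by simp_all
  then show ?thesis using assms unfolding Cper_def lap_def by simp
qed

lemma lap_add_scaled:
  "lap N L (\<lambda>i j k. u i j k + t * v i j k) = (\<lambda>i j k. lap N L u i j k + t * lap N L v i j k)"
  unfolding lap_def by (intro ext) (simp add: add_divide_distrib diff_divide_distrib algebra_simps)

lemma lap_add_const: "lap N L (\<lambda>i j k. u i j k + c) = lap N L u"
  unfolding lap_def by (intro ext) (simp add: algebra_simps)

lemma lap_cmult: "lap N L (\<lambda>i j k. c * u i j k) = (\<lambda>i j k. c * lap N L u i j k)"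
  unfolding lap_def by (intro ext) (simp add: algebra_simps)

lemma lap_uminus: "lap N L (\<lambda>i j k. - u i j k) = (\<lambda>i j k. - lap N L u i j k)"
  using lap_cmult[of N L "-1" u] by simp

lemma lap_diff: "lap N L (\<lambda>i j k. u i j k - v i j k) = (\<lambda>i j k. lap N L u i j k - lap N L v i j k)"
  using lap_add_scaled[of N L u "-1" v] by simp

lemma lap_tendsto:
  assumes "\<And>i j k. (\<lambda>n. U n i j k) \<longlonglongrightarrow> u i j k"
  shows "(\<lambda>n. lap N L (U n) i j k) \<longlonglongrightarrow> lap N L u i j k"
  unfolding lap_def divide_inverse by (intro tendsto_intros assms)

lemma csum_lap_eq_0:
  assumes "u \<in> Cper N"
  shows "csum N (lap N L u) = 0"
proof -
  have "csum N (lap N L u) = (csum N (\<lambda>i j k. u (i+1) (j+0) (k+0)) + csum N (\<lambda>i j k. u (i+(-1)) (j+0) (k+0))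
     + csum N (\<lambda>i j k. u (i+0) (j+1) (k+0)) + csum N (\<lambda>i j k. u (i+0) (j+(-1)) (k+0))
     + csum N (\<lambda>i j k. u (i+0) (j+0) (k+1)) + csum N (\<lambda>i j k. u (i+0) (j+0) (k+(-1)))
     - 6 * csum N u) / (gridh N L)^2"
    unfolding lap_def csum_divide[symmetric] csum_add[symmetric] csum_diff[symmetric] csum_cmult[symmetric]
    by simp
  then show ?thesis by (simp only: csum_shift[OF assms]) simp
qed

definition corr :: "nat \<Rightarrow> grid \<Rightarrow> grid \<Rightarrow> int \<Rightarrow> int \<Rightarrow> int \<Rightarrow> real" where
  "corr N a b p q r = csum N (\<lambda>i j k. a i j k * b (i+p) (j+q) (k+r))"

lemma corr_swap:
  assumes "a \<in> Cper N" "b \<in> Cper N"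
  shows "corr N a b p q r = corr N b a (-p) (-q) (-r)"
proof -
  let ?f = "\<lambda>i j k. b i j k * a (i + -p) (j + -q) (k + -r)"
  have "?f \<in> Cper N" by (rule Cper_comp2[OF assms(2) Cper_shift[OF assms(1)]])
  from csum_shift[OF this, of p q r] show ?thesis
    unfolding corr_def by (simp add: mult.commute)
qed

lemma csum_mult_lap:
  "csum N (\<lambda>i j k. a i j k * lap N L b i j k) =
   (corr N a b 1 0 0 + corr N a b (-1) 0 0 + corr N a b 0 1 0 + corr N a b 0 (-1) 0
    + corr N a b 0 0 1 + corr N a b 0 0 (-1) - 6 * corr N a b 0 0 0) / (gridh N L)^2"
  unfolding corr_def csum_add[symmetric] csum_diff[symmetric] csum_cmult[symmetric] csum_divide[symmetric]
  by (intro csum_cong) (simp add: lap_def add_divide_distrib diff_divide_distrib algebra_simps)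

lemma csum_mult_lap_sym:
  assumes "a \<in> Cper N" "b \<in> Cper N"
  shows "csum N (\<lambda>i j k. a i j k * lap N L b i j k) = csum N (\<lambda>i j k. b i j k * lap N L a i j k)"
  unfolding csum_mult_lap corr_swap[OF assms, of "-1"] corr_swap[OF assms, of 1]
    corr_swap[OF assms, of 0 "-1"] corr_swap[OF assms, of 0 1] corr_swap[OF assms, of 0 0 "-1"]
    corr_swap[OF assms, of 0 0 1] corr_swap[OF assms, of 0 0 0]
  by (simp add: algebra_simps)

definition diff_energy :: "nat \<Rightarrow> grid \<Rightarrow> int \<Rightarrow> int \<Rightarrow> int \<Rightarrow> real" where
  "diff_energy N z p q r = csum N (\<lambda>i j k. (z (i+p) (j+q) (k+r) - z i j k)^2)"

lemma diff_energy_nonneg: "0 \<le> diff_energy N z p q r"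
  unfolding diff_energy_def by (rule csum_nonneg) simp

lemma diff_energy_eq_corr:
  assumes "z \<in> Cper N"
  shows "diff_energy N z p q r = 2 * corr N z z 0 0 0 - 2 * corr N z z p q r"
proof -
  have "diff_energy N z p q r =
      csum N (\<lambda>i j k. (z (i+p) (j+q) (k+r))^2) + csum N (\<lambda>i j k. (z i j k)^2) - 2 * corr N z z p q r"
    unfolding diff_energy_def corr_def csum_add[symmetric] csum_diff[symmetric] csum_cmult[symmetric]
    by (rule csum_cong) (simp add: power2_diff algebra_simps)
  moreover have "csum N (\<lambda>i j k. (z (i+p) (j+q) (k+r))^2) = csum N (\<lambda>i j k. (z i j k)^2)"
    using csum_shift[OF Cper_comp[OF assms, of "\<lambda>x. x^2"]] by simp
  ultimately show ?thesis unfolding corr_def by (simp add: power2_eq_square)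
qed

lemma csum_mult_lap_self:
  assumes "z \<in> Cper N"
  shows "csum N (\<lambda>i j k. z i j k * lap N L z i j k) =
    - (diff_energy N z 1 0 0 + diff_energy N z 0 1 0 + diff_energy N z 0 0 1) / (gridh N L)^2"
proof -
  have "corr N z z (-1) 0 0 = corr N z z 1 0 0" "corr N z z 0 (-1) 0 = corr N z z 0 1 0"
    "corr N z z 0 0 (-1) = corr N z z 0 0 1"
    using corr_swap[OF assms assms, of 1 0 0] corr_swap[OF assms assms, of 0 1 0]
      corr_swap[OF assms assms, of 0 0 1] by simp_all
  then show ?thesis
    unfolding csum_mult_lap diff_energy_eq_corr[OF assms] by (simp only:) (simp add: algebra_simps)
qed

lemma csum_mult_lap_self_nonpos:
  assumes "z \<in> Cper N"
  shows "csum N (\<lambda>i j k. z i j k * lap N L z i j k) \<le> 0"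
proof -
  have "0 \<le> diff_energy N z 1 0 0 + diff_energy N z 0 1 0 + diff_energy N z 0 0 1"
    by (simp add: diff_energy_nonneg add_nonneg_nonneg)
  then show ?thesis unfolding csum_mult_lap_self[OF assms] by (intro divide_nonpos_nonneg) auto
qed

section \<open>Existence of minimizers\<close>

lemma attains_min_if_seq_compact:
  fixes J :: "'a \<Rightarrow> real"
  assumes "T \<noteq> {}"
    and seq: "\<And>U :: nat \<Rightarrow> 'a. (\<And>n. U n \<in> T) \<Longrightarrow> \<exists>r u. strict_mono r \<and> u \<in> T \<and> (\<lambda>n. J (U (r n))) \<longlonglongrightarrow> J u"
  shows "\<exists>u\<in>T. \<forall>w\<in>T. J u \<le> J w"
proof -
  have bdd: "bdd_below (J ` T)"
  proof (rule ccontr)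
    assume "\<not> bdd_below (J ` T)"
    then have "\<forall>n::nat. \<exists>u\<in>T. J u < - real n"
      unfolding bdd_below_def by (metis imageE not_le)
    then obtain U where U: "\<And>n. U n \<in> T" "\<And>n. J (U n) < - real n" by metis
    have "\<exists>r u. strict_mono r \<and> u \<in> T \<and> (\<lambda>n. J (U (r n))) \<longlonglongrightarrow> J u"
      using seq[of U] U(1) by blast
    then obtain r u where r: "strict_mono r" and lim: "(\<lambda>n. J (U (r n))) \<longlonglongrightarrow> J u"
      by blast
    obtain K where K: "\<And>n. norm (J (U (r n))) \<le> K"
      using convergent_imp_Bseq[OF convergentI[OF lim]] unfolding Bseq_def by blast
    define n where "n = nat \<lceil>K\<rceil>"
    have "J (U (r n)) < - real n"
      using U(2)[of "r n"] seq_suble[OF r, of n] by simp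
    then show False using K[of n] real_nat_ceiling_ge[of K] unfolding n_def by simp
  qed
  define m where "m = Inf (J ` T)"
  have "\<exists>u\<in>T. J u < m + inverse (real (Suc n))" for n
    using cInf_lessD[of "J ` T" "m + inverse (real (Suc n))"] assms(1) unfolding m_def by auto
  then obtain U where U: "\<And>n. U n \<in> T" "\<And>n. J (U n) < m + inverse (real (Suc n))" by metis
  have "\<exists>r u. strict_mono r \<and> u \<in> T \<and> (\<lambda>n. J (U (r n))) \<longlonglongrightarrow> J u"
    using seq[of U] U(1) by blast
  then obtain r u where r: "strict_mono r" and u: "u \<in> T" and lim: "(\<lambda>n. J (U (r n))) \<longlonglongrightarrow> J u"
    by blast
  have "J (U (r n)) \<le> m + inverse (real (Suc n))" for n
  proof -
    have "inverse (real (Suc (r n))) \<le> inverse (real (Suc n))"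
      using seq_suble[OF r, of n] by (simp add: le_imp_inverse_le)
    then show ?thesis using U(2)[of "r n"] by linarith
  qed
  then have "J u \<le> m"
    by (intro LIMSEQ_le[OF lim LIMSEQ_inverse_real_of_nat_add]) auto
  then show ?thesis using u bdd unfolding m_def by (meson cInf_lower imageI order_trans)
qed

lemma bounded_finite_subseq:
  fixes U :: "nat \<Rightarrow> 'p \<Rightarrow> real"
  assumes "finite C" "\<And>n p. p \<in> C \<Longrightarrow> \<bar>U n p\<bar> \<le> B"
  shows "\<exists>r l. strict_mono r \<and> (\<forall>p\<in>C. (\<lambda>n. U (r n) p) \<longlonglongrightarrow> l p)"
  using assms
proof (induction C rule: finite_induct)
  case empty
  show ?case by (rule exI[of _ id]) (auto simp: strict_mono_def)
next
  case (insert a C)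
  then obtain r l where r: "strict_mono r" "\<forall>p\<in>C. (\<lambda>n. U (r n) p) \<longlonglongrightarrow> l p" by auto
  have "bounded (range (\<lambda>n. U (r n) a))"
    unfolding bounded_iff using insert.prems by auto
  then obtain la s where s: "strict_mono s" "((\<lambda>n. U (r n) a) \<circ> s) \<longlonglongrightarrow> la"
    using bounded_imp_convergent_subsequence by blast
  have "\<forall>p\<in>C. ((\<lambda>n. U (r n) p) \<circ> s) \<longlonglongrightarrow> l p"
    using r(2) LIMSEQ_subseq_LIMSEQ[OF _ s(1)] by blast
  then have "\<forall>p\<in>insert a C. (\<lambda>n. U ((r \<circ> s) n) p) \<longlonglongrightarrow> (l(a := la)) p"
    using s(2) insert.hyps(2) by (auto simp: comp_def)
  then show ?case using strict_mono_o[OF r(1) s(1)] by blast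
qed

lemma Cper_bounded_subseq:
  fixes U :: "nat \<Rightarrow> grid"
  assumes N: "N > 0" and U: "\<And>n. U n \<in> Cper N"
    and B: "\<And>n i j k. (i,j,k) \<in> cells N \<Longrightarrow> \<bar>U n i j k\<bar> \<le> B"
  shows "\<exists>r u. strict_mono r \<and> u \<in> Cper N \<and> (\<forall>i j k. (\<lambda>n. U (r n) i j k) \<longlonglongrightarrow> u i j k)"
proof -
  obtain r l where r: "strict_mono r"
    and l: "\<forall>p\<in>cells N. (\<lambda>n. (\<lambda>(i,j,k). U (r n) i j k) p) \<longlonglongrightarrow> l p"
    using bounded_finite_subseq[OF finite_cells, where U="\<lambda>n (i,j,k). U n i j k" and B=B] B by fastforce
  define u where "u = (\<lambda>i j k. l (cell_rep N i, cell_rep N j, cell_rep N k))"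
  have "u \<in> Cper N" unfolding Cper_def u_def by (simp add: cell_rep_add_period)
  moreover have "(\<lambda>n. U (r n) i j k) \<longlonglongrightarrow> u i j k" for i j k
    using l cell_rep_cells[OF N, of i j k] Cper_cell_rep[OF U] unfolding u_def by fastforce
  ultimately show ?thesis using r by blast
qed

text \<open>The functional only sees \<open>u\<close> up to additive constants; normalizing \<open>u 1 1 1 = 0\<close> makes
  its sublevel sets bounded.\<close>

lemma Cper_attains_min:
  fixes J :: "grid \<Rightarrow> real" and Q :: "grid \<Rightarrow> bool"
  assumes N: "N > 0"
    and shift: "\<And>u c. u \<in> Cper N \<Longrightarrow> Q u \<Longrightarrow> Q (\<lambda>i j k. u i j k + c) \<and> J (\<lambda>i j k. u i j k + c) = J u"
    and v: "v \<in> Cper N" "Q v"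
    and bound: "\<And>u i j k. u \<in> Cper N \<Longrightarrow> Q u \<Longrightarrow> u 1 1 1 = 0 \<Longrightarrow> J u \<le> J v \<Longrightarrow> (i,j,k) \<in> cells N
                 \<Longrightarrow> \<bar>u i j k\<bar> \<le> B"
    and cont: "\<And>U u. (\<And>n. U n \<in> Cper N) \<Longrightarrow> (\<And>n. Q (U n)) \<Longrightarrow> u \<in> Cper N
                 \<Longrightarrow> (\<And>i j k. (\<lambda>n. U n i j k) \<longlonglongrightarrow> u i j k) \<Longrightarrow> Q u \<and> (\<lambda>n. J (U n)) \<longlonglongrightarrow> J u"
  shows "\<exists>u. u \<in> Cper N \<and> Q u \<and> (\<forall>w. w \<in> Cper N \<longrightarrow> Q w \<longrightarrow> J u \<le> J w)"
proof -
  define T where "T = {u. u \<in> Cper N \<and> Q u \<and> u 1 1 1 = 0 \<and> J u \<le> J v}"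
  define norm1 :: "grid \<Rightarrow> grid" where "norm1 = (\<lambda>w. \<lambda>i j k. w i j k - w 1 1 1)"
  have norm1: "norm1 w \<in> Cper N \<and> Q (norm1 w) \<and> J (norm1 w) = J w \<and> norm1 w 1 1 1 = 0"
    if "w \<in> Cper N" "Q w" for w
    using shift[OF that, of "- w 1 1 1"] Cper_comp[OF that(1), of "\<lambda>x. x - w 1 1 1"]
    unfolding norm1_def by simp
  have "\<exists>u\<in>T. \<forall>w\<in>T. J u \<le> J w"
  proof (rule attains_min_if_seq_compact)
    show "T \<noteq> {}" using norm1[OF v] unfolding T_def by auto
  next
    fix U :: "nat \<Rightarrow> grid" assume UT: "\<And>n. U n \<in> T"
    then have UC: "U n \<in> Cper N" "Q (U n)" "U n 1 1 1 = 0" "J (U n) \<le> J v" for n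
      unfolding T_def by auto
    have "\<exists>r u. strict_mono r \<and> u \<in> Cper N \<and> (\<forall>i j k. (\<lambda>n. U (r n) i j k) \<longlonglongrightarrow> u i j k)"
      by (rule Cper_bounded_subseq[OF N UC(1)]) (rule bound[OF UC(1-4)])
    then obtain r u where r: "strict_mono r" "u \<in> Cper N" "\<And>i j k. (\<lambda>n. U (r n) i j k) \<longlonglongrightarrow> u i j k"
      by blast
    have c: "Q u \<and> (\<lambda>n. J (U (r n))) \<longlonglongrightarrow> J u"
      by (rule cont) (use UC r in auto)
    have "u 1 1 1 = 0" using r(3)[of 1 1 1] UC(3) by (simp add: LIMSEQ_const_iff)
    moreover have "J u \<le> J v" using c UC(4) by (intro LIMSEQ_le_const2[of "\<lambda>n. J (U (r n))"]) auto
    ultimately show "\<exists>r u. strict_mono r \<and> u \<in> T \<and> (\<lambda>n. J (U (r n))) \<longlonglongrightarrow> J u"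
      using r(1,2) c unfolding T_def by blast
  qed
  then obtain u where u: "u \<in> T" and min: "\<And>w. w \<in> T \<Longrightarrow> J u \<le> J w" by blast
  have "J u \<le> J w" if "w \<in> Cper N" "Q w" for w
  proof (cases "J w \<le> J v")
    case True
    then show ?thesis using min[of "norm1 w"] norm1[OF that] unfolding T_def by auto
  next
    case False
    then show ?thesis using min[of "norm1 v"] norm1[OF v] unfolding T_def by auto
  qed
  then show ?thesis using u unfolding T_def by blast
qed

lemma abs_diff_le_steps:
  fixes g :: "int \<Rightarrow> real"
  assumes step: "\<And>s. 1 \<le> s \<Longrightarrow> s < n \<Longrightarrow> \<bar>g (s + 1) - g s\<bar> \<le> D" and "0 \<le> D" and i: "i \<in> {1..n}"
  shows "\<bar>g i - g 1\<bar> \<le> of_int n * D"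
proof -
  have "i \<le> n \<longrightarrow> \<bar>g i - g 1\<bar> \<le> of_int (i - 1) * D" if "1 \<le> i" for i
    using that
  proof (induction i rule: int_ge_induct)
    case (step i)
    have "\<bar>g (i + 1) - g 1\<bar> \<le> \<bar>g (i + 1) - g i\<bar> + \<bar>g i - g 1\<bar>" by linarith
    then show ?case using step.IH step.hyps assms(1)[of i] by (auto simp: algebra_simps)
  qed simp
  moreover have "of_int (i - 1) * D \<le> of_int n * D" using i \<open>0 \<le> D\<close> by (intro mult_right_mono) auto
  ultimately show ?thesis using i by fastforce
qed

lemma abs_diff_le_sqrt_diff_energy:
  assumes "diff_energy N u p q r \<le> E" "(i,j,k) \<in> cells N"
  shows "\<bar>u (i+p) (j+q) (k+r) - u i j k\<bar> \<le> sqrt E"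
proof -
  have "(u (i+p) (j+q) (k+r) - u i j k)^2 \<le> diff_energy N u p q r"
    unfolding diff_energy_def
    by (rule member_le_csum[of N "\<lambda>i j k. (u (i+p) (j+q) (k+r) - u i j k)^2"]) (use assms in auto)
  then show ?thesis using assms(1) real_le_rsqrt by fastforce
qed

text \<open>Walking from the cell \<open>(1,1,1)\<close> to any other cell in at most \<open>3N\<close> unit steps bounds the
  oscillation of \<open>u\<close> by its discrete gradient.\<close>

lemma abs_le_diff_energy:
  assumes u0: "u 1 1 1 = 0" and E: "diff_energy N u 1 0 0 + diff_energy N u 0 1 0 + diff_energy N u 0 0 1 \<le> E"
    and c: "(i,j,k) \<in> cells N"
  shows "\<bar>u i j k\<bar> \<le> 3 * real N * sqrt E"
proof -
  have E1: "diff_energy N u 1 0 0 \<le> E" "diff_energy N u 0 1 0 \<le> E" "diff_energy N u 0 0 1 \<le> E"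
    using E diff_energy_nonneg[of N u] by (smt (verit))+
  have sE: "0 \<le> sqrt E" using E1(1) diff_energy_nonneg[of N u 1 0 0] by simp
  have ijk: "i \<in> {1..int N}" "j \<in> {1..int N}" "k \<in> {1..int N}" using c unfolding cells_def by auto
  have "\<bar>u i j k - u 1 j k\<bar> \<le> real N * sqrt E"
    using abs_diff_le_steps[of "int N" "\<lambda>s. u s j k", OF _ sE ijk(1)]
      abs_diff_le_sqrt_diff_energy[OF E1(1), of _ j k] ijk unfolding cells_def by force
  moreover have "\<bar>u 1 j k - u 1 1 k\<bar> \<le> real N * sqrt E"
    using abs_diff_le_steps[of "int N" "\<lambda>s. u 1 s k", OF _ sE ijk(2)]
      abs_diff_le_sqrt_diff_energy[OF E1(2), of 1 _ k] ijk unfolding cells_def by force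
  moreover have "\<bar>u 1 1 k - u 1 1 1\<bar> \<le> real N * sqrt E"
    using abs_diff_le_steps[of "int N" "\<lambda>s. u 1 1 s", OF _ sE ijk(3)]
      abs_diff_le_sqrt_diff_energy[OF E1(3), of 1 1] ijk unfolding cells_def by force
  ultimately show ?thesis using u0 by linarith
qed

section \<open>The logarithmic entropy\<close>

text \<open>Since \<open>ln 0 = 0\<close> in Isabelle, \<open>xlnx 0 = 0\<close> is the continuous extension, so \<open>entropy\<close> is
  continuous on the closed interval \<open>[-1, 1]\<close>.\<close>

definition xlnx :: "real \<Rightarrow> real" where
  "xlnx y = y * ln y"

definition entropy :: "real \<Rightarrow> real" where
  "entropy x = xlnx (1 + x) + xlnx (1 - x)"

definition entropy_deriv :: "real \<Rightarrow> real" where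
  "entropy_deriv x = ln (1 + x) - ln (1 - x)"

lemma continuous_on_xlnx: "continuous_on {0..} xlnx"
  unfolding continuous_on_def
proof
  fix x :: real assume x: "x \<in> {0..}"
  show "(xlnx \<longlongrightarrow> xlnx x) (at x within {0..})"
  proof (cases "x = 0")
    case True
    have "((\<lambda>x::real. x * ln x) \<longlongrightarrow> 0) (at_right 0)" by real_asymp
    then show ?thesis using True by (simp add: xlnx_def[abs_def] at_within_Ici_at_right)
  next
    case False
    then have "isCont xlnx x" using x unfolding xlnx_def[abs_def] by (intro continuous_intros) auto
    then show ?thesis by (metis continuous_within isCont_def continuous_at_imp_continuous_at_within)
  qed
qed

lemma continuous_on_entropy: "continuous_on {-1..1} entropy"
proof -
  have "continuous_on {-1..1} (\<lambda>x. xlnx (1 + x))" "continuous_on {-1..1} (\<lambda>x. xlnx (1 - x))"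
    by (auto intro!: continuous_on_compose2[OF continuous_on_xlnx] continuous_intros)
  then show ?thesis unfolding entropy_def[abs_def] by (rule continuous_on_add)
qed

lemma diff_one_le_xlnx: "0 \<le> y \<Longrightarrow> y - 1 \<le> xlnx y"
  using ln_le_minus_one[of "1 / y"] by (cases "y = 0") (auto simp: xlnx_def ln_div field_simps)

lemma entropy_nonneg: "\<bar>x\<bar> \<le> 1 \<Longrightarrow> 0 \<le> entropy x"
  using diff_one_le_xlnx[of "1 + x"] diff_one_le_xlnx[of "1 - x"] unfolding entropy_def by (simp add: abs_le_iff)

lemma entropy_minus: "entropy (- x) = entropy x"
  unfolding entropy_def by simp

lemma xlnx_tangent_le:
  assumes "0 < y" "0 \<le> z"
  shows "xlnx y + (ln y + 1) * (z - y) \<le> xlnx z"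
proof (cases "z = 0")
  case False
  then have z: "0 < z" using assms by simp
  have "ln y - ln z \<le> y / z - 1" using ln_le_minus_one[of "y / z"] assms z by (simp add: ln_div)
  then have "z * (ln y - ln z) \<le> z * (y / z - 1)" using z by (intro mult_left_mono) auto
  then show ?thesis using z by (simp add: xlnx_def algebra_simps)
qed (use assms in \<open>simp add: xlnx_def algebra_simps\<close>)

lemma entropy_tangent_le:
  assumes "\<bar>y\<bar> < 1" "\<bar>z\<bar> \<le> 1"
  shows "entropy y + entropy_deriv y * (z - y) \<le> entropy z"
  using xlnx_tangent_le[of "1 + y" "1 + z"] xlnx_tangent_le[of "1 - y" "1 - z"] assms
  unfolding entropy_def entropy_deriv_def by (simp add: abs_less_iff abs_le_iff algebra_simps)

lemma entropy_deriv_strict_mono: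
  assumes "\<bar>a\<bar> < 1" "\<bar>b\<bar> < 1" "a < b"
  shows "entropy_deriv a < entropy_deriv b"
proof -
  have "ln (1 + a) < ln (1 + b)" "ln (1 - b) < ln (1 - a)" using assms by simp_all
  then show ?thesis unfolding entropy_deriv_def by simp
qed

lemma entropy_deriv_mono:
  assumes "\<bar>a\<bar> < 1" "\<bar>b\<bar> < 1" "a \<le> b"
  shows "entropy_deriv a \<le> entropy_deriv b"
  using entropy_deriv_strict_mono[OF assms(1,2)] assms(3) by (cases "a = b") auto

lemma entropy_deriv_monotone:
  assumes "\<bar>a\<bar> < 1" "\<bar>b\<bar> < 1"
  shows "0 \<le> (a - b) * (entropy_deriv a - entropy_deriv b)"
    and "a \<noteq> b \<Longrightarrow> 0 < (a - b) * (entropy_deriv a - entropy_deriv b)"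
proof -
  show "a \<noteq> b \<Longrightarrow> 0 < (a - b) * (entropy_deriv a - entropy_deriv b)"
    using entropy_deriv_strict_mono[OF assms(1,2)] entropy_deriv_strict_mono[OF assms(2,1)]
    by (cases "a < b") (auto intro: mult_pos_pos mult_neg_neg)
  then show "0 \<le> (a - b) * (entropy_deriv a - entropy_deriv b)" by (cases "a = b") auto
qed

lemma minus_ln_le_entropy_deriv: "0 < s \<Longrightarrow> s \<le> 1 \<Longrightarrow> - ln s \<le> entropy_deriv (1 - s)"
  unfolding entropy_deriv_def by simp

lemma has_real_derivative_entropy:
  assumes "\<bar>y\<bar> < 1"
  shows "(entropy has_real_derivative entropy_deriv y) (at y)"
proof -
  have "1 + y > 0" "1 - y > 0" using assms by auto
  then have "((\<lambda>x. (1 + x) * ln (1 + x) + (1 - x) * ln (1 - x)) has_real_derivative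
      (ln (1 + y) + 1) + (- ln (1 - y) - 1)) (at y)"
    by (auto intro!: derivative_eq_intros)
  then show ?thesis unfolding entropy_def[abs_def] xlnx_def entropy_deriv_def by simp
qed

lemma eventually_inside_along_line:
  fixes \<psi> a :: "'p \<Rightarrow> real"
  assumes "finite I"
    and range: "\<And>x. x \<in> I \<Longrightarrow> \<bar>\<psi> x\<bar> \<le> 1"
    and up: "\<And>x. x \<in> I \<Longrightarrow> \<psi> x = 1 \<Longrightarrow> a x \<le> 0"
    and down: "\<And>x. x \<in> I \<Longrightarrow> \<psi> x = -1 \<Longrightarrow> 0 \<le> a x"
  shows "\<forall>\<^sub>F t in at_right 0. \<forall>x\<in>I. a x \<noteq> 0 \<longrightarrow> \<bar>\<psi> x + t * a x\<bar> < 1"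
proof -
  have "\<forall>\<^sub>F t in at_right 0. a x \<noteq> 0 \<longrightarrow> \<bar>\<psi> x + t * a x\<bar> < 1" if x: "x \<in> I" for x
  proof (cases "a x = 0")
    case False
    have lim: "((\<lambda>t. \<psi> x + t * a x) \<longlongrightarrow> \<psi> x) (at_right 0)"
      by (auto intro!: tendsto_eq_intros)
    have pos: "\<forall>\<^sub>F t in at_right 0. (0::real) < t" by (rule eventually_at_right_less)
    have "\<forall>\<^sub>F t in at_right 0. \<psi> x + t * a x < 1"
    proof (cases "\<psi> x < 1")
      case True
      then show ?thesis using order_tendstoD(2)[OF lim] by blast
    next
      case False
      then have h: "\<psi> x = 1" "a x < 0" using range[OF x] up[OF x] \<open>a x \<noteq> 0\<close> by fastforce+
      show ?thesis using pos by eventually_elim (use h in \<open>simp add: mult_pos_neg\<close>)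
    qed
    moreover have "\<forall>\<^sub>F t in at_right 0. -1 < \<psi> x + t * a x"
    proof (cases "-1 < \<psi> x")
      case True
      then show ?thesis using order_tendstoD(1)[OF lim] by blast
    next
      case False
      then have h: "\<psi> x = -1" "0 < a x" using range[OF x] down[OF x] \<open>a x \<noteq> 0\<close> by fastforce+
      show ?thesis using pos by eventually_elim (use h in simp)
    qed
    ultimately show ?thesis by eventually_elim auto
  qed simp
  then show ?thesis by (rule eventually_ball_finite[OF \<open>finite I\<close>, rule_format])
qed

lemma entropy_diff_le:
  assumes "\<bar>y + t * a\<bar> < 1" "\<bar>y\<bar> \<le> 1"
  shows "entropy (y + t * a) - entropy y \<le> t * (a * entropy_deriv (y + t * a))"
  using entropy_tangent_le[OF assms] by (simp add: algebra_simps)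

lemma mult_entropy_deriv_le:
  assumes "\<bar>y + s * a\<bar> < 1" "\<bar>y + t * a\<bar> < 1" "s \<le> t"
  shows "a * entropy_deriv (y + s * a) \<le> a * entropy_deriv (y + t * a)"
proof (cases "0 \<le> a")
  case True
  then have "y + s * a \<le> y + t * a" using assms(3) by (simp add: mult_right_mono)
  then show ?thesis using True by (intro mult_left_mono entropy_deriv_mono assms(1,2))
next
  case False
  then have "y + t * a \<le> y + s * a" using assms(3) by (simp add: mult_right_mono_neg)
  then show ?thesis using False by (intro mult_left_mono_neg entropy_deriv_mono assms(1,2)) auto
qed

lemma exists_mult_ln_le:
  fixes \<alpha> t1 R :: real
  assumes "0 < \<alpha>" "0 < t1"
  shows "\<exists>t. 0 < t \<and> t \<le> t1 \<and> \<alpha> * ln (t * \<alpha>) \<le> - R"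
proof -
  define t where "t = min t1 (exp (- R / \<alpha>) / \<alpha>)"
  have t: "0 < t" "t \<le> t1" using assms by (auto simp: t_def)
  have "t * \<alpha> \<le> exp (- R / \<alpha>)" using assms(1) by (simp add: t_def pos_le_divide_eq[symmetric])
  then have "ln (t * \<alpha>) \<le> - R / \<alpha>"
    using ln_le_cancel_iff[of "t * \<alpha>" "exp (- R / \<alpha>)"] t(1) assms(1) by simp
  then show ?thesis using t assms(1) by (intro exI[of _ t]) (simp add: field_simps)
qed

text \<open>Moving a configuration off the saturation boundary \<open>\<psi> = 1\<close> lowers the entropy at a rate
  \<open>t ln t\<close>, faster than any linear rate; this is what keeps minimizers away from \<open>\<plusminus>1\<close>.\<close>

lemma entropy_sum_descent:
  fixes \<psi> a :: "'p \<Rightarrow> real"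
  assumes fin: "finite I" and z: "z \<in> I" "\<psi> z = 1" "a z < 0"
    and range: "\<And>x. x \<in> I \<Longrightarrow> \<bar>\<psi> x\<bar> \<le> 1"
    and up: "\<And>x. x \<in> I \<Longrightarrow> \<psi> x = 1 \<Longrightarrow> a x \<le> 0"
    and down: "\<And>x. x \<in> I \<Longrightarrow> \<psi> x = -1 \<Longrightarrow> 0 \<le> a x"
  shows "\<exists>t>0. t \<le> 1 \<and> (\<forall>x\<in>I. \<bar>\<psi> x + t * a x\<bar> \<le> 1)
           \<and> (\<Sum>x\<in>I. entropy (\<psi> x + t * a x) - entropy (\<psi> x)) < - B * t"
proof -
  define \<alpha> where "\<alpha> = - a z"
  have \<alpha>: "0 < \<alpha>" using z by (simp add: \<alpha>_def)
  have "\<forall>\<^sub>F t in at_right 0. \<forall>x\<in>I. a x \<noteq> 0 \<longrightarrow> \<bar>\<psi> x + t * a x\<bar> < 1"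
    by (rule eventually_inside_along_line[OF fin]) (use range up down in auto)
  then obtain b where b: "0 < b"
    and inside_b: "\<And>t. 0 < t \<Longrightarrow> t < b \<Longrightarrow> \<forall>x\<in>I. a x \<noteq> 0 \<longrightarrow> \<bar>\<psi> x + t * a x\<bar> < 1"
    unfolding eventually_at_right_field by auto
  define t1 where "t1 = min (b / 2) (min 1 (1 / \<alpha>))"
  have t1: "0 < t1" "t1 \<le> 1" "t1 \<le> 1 / \<alpha>" "t1 < b" using b \<alpha> by (auto simp: t1_def)
  have inside: "\<bar>\<psi> x + t * a x\<bar> < 1" if "x \<in> I" "a x \<noteq> 0" "0 < t" "t \<le> t1" for x t
    using inside_b[of t] that t1(4) by auto
  define G where "G = (\<lambda>x t. a x * entropy_deriv (\<psi> x + t * a x))"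
  define C where "C = (\<Sum>x\<in>I - {z}. G x t1)"
  obtain t where t: "0 < t" "t \<le> t1" and ln_t: "\<alpha> * ln (t * \<alpha>) \<le> - (B + \<bar>C\<bar> + 1)"
    using exists_mult_ln_le[OF \<alpha> t1(1)] by blast
  have feasible: "\<forall>x\<in>I. \<bar>\<psi> x + t * a x\<bar> \<le> 1"
    using inside[OF _ _ t(1,2)] range by (metis add_0_right less_imp_le mult_zero_right)
  have diff: "entropy (\<psi> x + t * a x) - entropy (\<psi> x) \<le> t * G x t" if "x \<in> I" for x
    using entropy_diff_le[OF inside[OF that _ t] range[OF that]] unfolding G_def
    by (cases "a x = 0") auto
  have "G x t \<le> G x t1" if "x \<in> I" for x
    using mult_entropy_deriv_le[OF inside[OF that _ t] inside[OF that _ t1(1) order_refl] t(2)]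
    unfolding G_def by (cases "a x = 0") auto
  then have rest: "(\<Sum>x\<in>I - {z}. G x t) \<le> C" unfolding C_def by (intro sum_mono) auto
  have "t * \<alpha> \<le> t1 * \<alpha>" using t(2) \<alpha> by (intro mult_right_mono) auto
  also have "t1 * \<alpha> \<le> 1" using t1(3) \<alpha> by (simp add: pos_le_divide_eq)
  finally have t\<alpha>: "0 < t * \<alpha>" "t * \<alpha> \<le> 1" using t(1) \<alpha> by simp_all
  have "G z t = - \<alpha> * entropy_deriv (1 - t * \<alpha>)" unfolding G_def \<alpha>_def using z by simp
  also have "\<dots> \<le> \<alpha> * ln (t * \<alpha>)"
    using mult_left_mono[OF minus_ln_le_entropy_deriv[OF t\<alpha>], of \<alpha>] \<alpha> by simp
  finally have "(\<Sum>x\<in>I. G x t) \<le> - B - 1"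
    using sum.remove[OF fin z(1), of "\<lambda>x. G x t"] rest ln_t by linarith
  moreover have "(\<Sum>x\<in>I. entropy (\<psi> x + t * a x) - entropy (\<psi> x)) \<le> t * (\<Sum>x\<in>I. G x t)"
    unfolding sum_distrib_left by (rule sum_mono) (rule diff)
  ultimately have "(\<Sum>x\<in>I. entropy (\<psi> x + t * a x) - entropy (\<psi> x)) \<le> t * (- B - 1)"
    using t(1) by (smt (verit) mult_left_mono)
  then show ?thesis using t t1(2) feasible by (intro exI[of _ t]) (auto simp: algebra_simps)
qed

section \<open>The discrete Poisson problem\<close>

definition poisson_energy :: "nat \<Rightarrow> real \<Rightarrow> grid \<Rightarrow> grid \<Rightarrow> real" where
  "poisson_energy N L f u =
     csum N (\<lambda>i j k. f i j k * u i j k) - csum N (\<lambda>i j k. u i j k * lap N L u i j k) / 2"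

lemma gridh_pos: "L > 0 \<Longrightarrow> N > 0 \<Longrightarrow> gridh N L > 0"
  unfolding gridh_def by simp

lemma sqrt_le_if_le_mult_sqrt:
  fixes x c :: real
  assumes "0 \<le> x" "x \<le> c * sqrt x" "0 \<le> c"
  shows "sqrt x \<le> c"
proof (cases "x = 0")
  case False
  then have "0 < sqrt x" using assms(1) by simp
  moreover have "sqrt x * sqrt x \<le> c * sqrt x" using assms(1,2) by simp
  ultimately show ?thesis by (metis mult_le_cancel_right_pos)
qed (use assms in simp)

lemma poisson_energy_add_const:
  assumes u: "u \<in> Cper N" and mass: "csum N f = 0"
  shows "poisson_energy N L f (\<lambda>i j k. u i j k + c) = poisson_energy N L f u"
proof -
  have "csum N (\<lambda>i j k. f i j k * (u i j k + c)) = csum N (\<lambda>i j k. f i j k * u i j k) + c * csum N f"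
    using csum_linear[of N f u c "\<lambda>_ _ _. 1"] by simp
  moreover have "csum N (\<lambda>i j k. (u i j k + c) * lap N L u i j k)
      = csum N (\<lambda>i j k. u i j k * lap N L u i j k) + c * csum N (lap N L u)"
    unfolding csum_add[symmetric] csum_cmult[symmetric] by (simp add: distrib_right)
  ultimately show ?thesis
    unfolding poisson_energy_def lap_add_const using csum_lap_eq_0[OF u] mass by simp
qed

lemma poisson_energy_sublevel_bound:
  assumes N: "N > 0" and L: "L > 0" and u: "u \<in> Cper N" "u 1 1 1 = 0" "poisson_energy N L f u \<le> 0"
    and c: "(i,j,k) \<in> cells N"
  shows "\<bar>u i j k\<bar> \<le> 3 * real N * (6 * (gridh N L)^2 * real N * csum N (\<lambda>i j k. \<bar>f i j k\<bar>))"
proof -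
  define h where "h = gridh N L"
  have h: "h > 0" unfolding h_def using gridh_pos[OF L N] .
  define F1 where "F1 = csum N (\<lambda>i j k. \<bar>f i j k\<bar>)"
  have F1: "0 \<le> F1" unfolding F1_def by (rule csum_nonneg) simp
  define E where "E = diff_energy N u 1 0 0 + diff_energy N u 0 1 0 + diff_energy N u 0 0 1"
  have E0: "0 \<le> E" unfolding E_def by (simp add: diff_energy_nonneg add_nonneg_nonneg)
  have bound: "\<And>i j k. (i,j,k) \<in> cells N \<Longrightarrow> \<bar>u i j k\<bar> \<le> 3 * real N * sqrt E"
    using abs_le_diff_energy[where u=u and N=N and E=E, OF u(2)] unfolding E_def by blast
  have "csum N (\<lambda>i j k. u i j k * lap N L u i j k) = - E / h^2"
    unfolding E_def h_def by (rule csum_mult_lap_self[OF u(1)])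
  then have "E / h^2 / 2 \<le> - csum N (\<lambda>i j k. f i j k * u i j k)"
    using u(3) unfolding poisson_energy_def by simp
  also have "\<dots> \<le> F1 * (3 * real N * sqrt E)"
  proof -
    have "\<bar>csum N (\<lambda>i j k. f i j k * u i j k)\<bar> \<le> F1 * (3 * real N * sqrt E)"
      unfolding F1_def by (rule abs_csum_mult_le) (rule bound)
    then show ?thesis by linarith
  qed
  finally have "E \<le> (6 * h^2 * real N * F1) * sqrt E" using h by (simp add: field_simps)
  then have "sqrt E \<le> 6 * h^2 * real N * F1" by (rule sqrt_le_if_le_mult_sqrt[OF E0]) (use F1 in simp)
  then show ?thesis
    using bound[OF c] unfolding h_def F1_def by (smt (verit) mult_left_mono of_nat_0_le_iff)
qed

lemma poisson_energy_attains_min: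
  assumes N: "N > 0" and L: "L > 0" and mass: "csum N f = 0"
  shows "\<exists>u\<in>Cper N. \<forall>w\<in>Cper N. poisson_energy N L f u \<le> poisson_energy N L f w"
proof -
  let ?J = "poisson_energy N L f"
  have "?J (\<lambda>i j k. 0) = 0" unfolding poisson_energy_def lap_def by (simp add: csum_const)
  then have "\<exists>u. u \<in> Cper N \<and> True \<and> (\<forall>w. w \<in> Cper N \<longrightarrow> True \<longrightarrow> ?J u \<le> ?J w)"
    using poisson_energy_add_const[OF _ mass] poisson_energy_sublevel_bound[OF N L]
    by (intro Cper_attains_min[OF N, where v="\<lambda>i j k. 0"])
      (auto simp: Cper_const poisson_energy_def intro!: tendsto_intros csum_tendsto lap_tendsto)
  then show ?thesis by blast
qed

lemma linear_coeff_eq_0_if_min: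
  fixes A B :: real
  assumes "\<And>t. 0 \<le> t * A + t^2 * B"
  shows "A = 0"
proof -
  have "((\<lambda>t. t * A + t^2 * B) has_real_derivative A) (at 0)"
    by (auto intro!: derivative_eq_intros)
  then show ?thesis by (rule DERIV_local_min[of _ _ _ 1]) (use assms in simp_all)
qed

lemma lap_eq_if_poisson_energy_min:
  assumes N: "N > 0" and u: "u \<in> Cper N" and f: "f \<in> Cper N"
    and min: "\<And>w. w \<in> Cper N \<Longrightarrow> poisson_energy N L f u \<le> poisson_energy N L f w"
  shows "lap N L u = f"
proof -
  define v where "v = (\<lambda>i j k. lap N L u i j k - f i j k)"
  have v: "v \<in> Cper N" unfolding v_def by (rule Cper_comp2[OF lap_Cper[OF u] f])
  have expand: "poisson_energy N L f (\<lambda>i j k. u i j k + t * v i j k) = poisson_energy N L f u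
       + t * (csum N (\<lambda>i j k. f i j k * v i j k) - csum N (\<lambda>i j k. v i j k * lap N L u i j k))
       - t^2 * csum N (\<lambda>i j k. v i j k * lap N L v i j k) / 2" for t
    unfolding poisson_energy_def lap_add_scaled csum_quadratic csum_linear csum_mult_lap_sym[OF u v]
    by (simp add: algebra_simps)
  have "csum N (\<lambda>i j k. f i j k * v i j k) - csum N (\<lambda>i j k. v i j k * lap N L u i j k)
      = - csum N (\<lambda>i j k. (v i j k)^2)"
    unfolding csum_diff[symmetric] csum_uminus[symmetric]
    by (rule csum_cong) (simp add: v_def power2_eq_square algebra_simps)
  note line = expand[unfolded this]
  have "- csum N (\<lambda>i j k. (v i j k)^2) = 0"
  proof (rule linear_coeff_eq_0_if_min)
    fix t :: real
    have "poisson_energy N L f u \<le> poisson_energy N L f (\<lambda>i j k. u i j k + t * v i j k)"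
      by (rule min) (rule Cper_add_scaled[OF u v])
    then show "0 \<le> t * - csum N (\<lambda>i j k. (v i j k)^2) + t^2 * - (csum N (\<lambda>i j k. v i j k * lap N L v i j k) / 2)"
      unfolding line by simp
  qed
  then have "\<And>i j k. (i,j,k) \<in> cells N \<Longrightarrow> v i j k = 0"
    using csum_sq_eq_0_imp[of N v] by simp
  then have "v = (\<lambda>i j k. 0)" by (rule Cper_eqI[OF v Cper_const N])
  then have "\<forall>i j k. lap N L u i j k - f i j k = 0" unfolding v_def by meson
  then show ?thesis by (auto intro!: ext)
qed

lemma poisson_solvable:
  assumes N: "N > 0" and L: "L > 0" and f: "f \<in> Cper N" and mass: "csum N f = 0"
  shows "\<exists>u\<in>Cper N. lap N L u = f"
  using poisson_energy_attains_min[OF N L mass] lap_eq_if_poisson_energy_min[OF N _ f] by blast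

section \<open>The convex functional behind the scheme\<close>

text \<open>Parametrising the new phase as \<open>\<phi>\<^sup>n + \<Delta>t \<Delta>\<^sub>h u\<close> avoids the inverse discrete Laplacian of the
  usual \<open>H\<^sup>-\<^sup>1\<close> gradient-flow formulation.\<close>

definition phase :: "nat \<Rightarrow> real \<Rightarrow> real \<Rightarrow> grid \<Rightarrow> grid \<Rightarrow> grid" where
  "phase N L dt \<phi>0 u = (\<lambda>i j k. \<phi>0 i j k + dt * lap N L u i j k)"

definition admissible :: "nat \<Rightarrow> real \<Rightarrow> real \<Rightarrow> grid \<Rightarrow> grid \<Rightarrow> bool" where
  "admissible N L dt \<phi>0 u \<longleftrightarrow> (\<forall>(i,j,k)\<in>cells N. \<bar>phase N L dt \<phi>0 u i j k\<bar> \<le> 1)"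

definition energy :: "nat \<Rightarrow> real \<Rightarrow> real \<Rightarrow> real \<Rightarrow> real \<Rightarrow> grid \<Rightarrow> grid \<Rightarrow> real" where
  "energy N L \<epsilon> \<theta> dt \<phi>0 u = (let \<psi> = phase N L dt \<phi>0 u in
     csum N (\<lambda>i j k. entropy (\<psi> i j k)) - \<theta> * csum N (\<lambda>i j k. \<phi>0 i j k * \<psi> i j k)
     - \<epsilon>^2 / 2 * csum N (\<lambda>i j k. \<psi> i j k * lap N L \<psi> i j k)
     - dt / 2 * csum N (\<lambda>i j k. u i j k * lap N L u i j k))"

lemma phase_Cper: "\<phi>0 \<in> Cper N \<Longrightarrow> u \<in> Cper N \<Longrightarrow> phase N L dt \<phi>0 u \<in> Cper N"
  unfolding phase_def by (rule Cper_add_scaled[OF _ lap_Cper])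

lemma csum_phase: "u \<in> Cper N \<Longrightarrow> csum N (phase N L dt \<phi>0 u) = csum N \<phi>0"
  unfolding phase_def csum_add csum_cmult csum_lap_eq_0 by simp

lemma phase_add_scaled:
  "phase N L dt \<phi>0 (\<lambda>i j k. u i j k + t * v i j k) =
   (\<lambda>i j k. phase N L dt \<phi>0 u i j k + t * (dt * lap N L v i j k))"
  unfolding phase_def lap_add_scaled by (simp add: algebra_simps)

lemma phase_add_const: "phase N L dt \<phi>0 (\<lambda>i j k. u i j k + c) = phase N L dt \<phi>0 u"
  unfolding phase_def lap_add_const ..

lemma phase_uminus:
  "phase N L dt (\<lambda>i j k. - \<phi>0 i j k) (\<lambda>i j k. - u i j k) = (\<lambda>i j k. - phase N L dt \<phi>0 u i j k)"
  unfolding phase_def lap_uminus by simp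

lemma admissible_uminus:
  "admissible N L dt (\<lambda>i j k. - \<phi>0 i j k) (\<lambda>i j k. - u i j k) = admissible N L dt \<phi>0 u"
  unfolding admissible_def phase_uminus by simp

lemma energy_uminus:
  "energy N L \<epsilon> \<theta> dt (\<lambda>i j k. - \<phi>0 i j k) (\<lambda>i j k. - u i j k) = energy N L \<epsilon> \<theta> dt \<phi>0 u"
  unfolding energy_def Let_def phase_uminus by (simp add: lap_uminus entropy_minus)

lemma energy_add_const:
  assumes "u \<in> Cper N"
  shows "energy N L \<epsilon> \<theta> dt \<phi>0 (\<lambda>i j k. u i j k + c) = energy N L \<epsilon> \<theta> dt \<phi>0 u"
proof -
  have "csum N (\<lambda>i j k. (u i j k + c) * lap N L u i j k)
      = csum N (\<lambda>i j k. u i j k * lap N L u i j k) + c * csum N (lap N L u)"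
    unfolding csum_add[symmetric] csum_cmult[symmetric] by (simp add: distrib_right)
  then show ?thesis
    unfolding energy_def phase_add_const lap_add_const csum_lap_eq_0[OF assms] by simp
qed

text \<open>Summation by parts brings the linear coefficient into this form.\<close>

lemma energy_along_line:
  fixes L dt :: real
  assumes u: "u \<in> Cper N" and v: "v \<in> Cper N" and \<phi>0: "\<phi>0 \<in> Cper N"
  defines "\<psi> \<equiv> phase N L dt \<phi>0 u" and "a \<equiv> \<lambda>i j k. dt * lap N L v i j k"
  shows "\<exists>c. \<forall>t. energy N L \<epsilon> \<theta> dt \<phi>0 (\<lambda>i j k. u i j k + t * v i j k) = energy N L \<epsilon> \<theta> dt \<phi>0 u
     + (csum N (\<lambda>i j k. entropy (\<psi> i j k + t * a i j k)) - csum N (\<lambda>i j k. entropy (\<psi> i j k)))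
     - t * (csum N (\<lambda>i j k. (\<theta> * \<phi>0 i j k + \<epsilon>^2 * lap N L \<psi> i j k) * a i j k)
            + dt * csum N (\<lambda>i j k. v i j k * lap N L u i j k))
     + t^2 * c"
proof -
  have \<psi>: "\<psi> \<in> Cper N" unfolding \<psi>_def by (rule phase_Cper[OF \<phi>0 u])
  have a: "a \<in> Cper N" unfolding a_def by (rule Cper_comp[OF lap_Cper[OF v]])
  have line: "phase N L dt \<phi>0 (\<lambda>i j k. u i j k + t * v i j k) = (\<lambda>i j k. \<psi> i j k + t * a i j k)" for t
    unfolding phase_add_scaled \<psi>_def a_def ..
  have split: "csum N (\<lambda>i j k. (\<theta> * \<phi>0 i j k + \<epsilon>^2 * lap N L \<psi> i j k) * a i j k)
      = \<theta> * csum N (\<lambda>i j k. \<phi>0 i j k * a i j k) + \<epsilon>^2 * csum N (\<lambda>i j k. a i j k * lap N L \<psi> i j k)"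
    unfolding csum_add[symmetric] csum_cmult[symmetric] by (rule csum_cong) (simp add: algebra_simps)
  show ?thesis
  proof (intro exI allI)
    fix t
    show "energy N L \<epsilon> \<theta> dt \<phi>0 (\<lambda>i j k. u i j k + t * v i j k) = energy N L \<epsilon> \<theta> dt \<phi>0 u
      + (csum N (\<lambda>i j k. entropy (\<psi> i j k + t * a i j k)) - csum N (\<lambda>i j k. entropy (\<psi> i j k)))
      - t * (csum N (\<lambda>i j k. (\<theta> * \<phi>0 i j k + \<epsilon>^2 * lap N L \<psi> i j k) * a i j k)
             + dt * csum N (\<lambda>i j k. v i j k * lap N L u i j k))
      + t^2 * (- (\<epsilon>^2) / 2 * csum N (\<lambda>i j k. a i j k * lap N L a i j k)
               - dt / 2 * csum N (\<lambda>i j k. v i j k * lap N L v i j k))"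
      unfolding energy_def Let_def line \<psi>_def[symmetric] lap_add_scaled csum_quadratic csum_linear split
        csum_mult_lap_sym[OF \<psi> a] csum_mult_lap_sym[OF u v]
      by (simp add: algebra_simps)
  qed
qed

lemma energy_lower_bound:
  assumes u: "u \<in> Cper N" and \<phi>0: "\<phi>0 \<in> Cper N" and adm: "admissible N L dt \<phi>0 u"
  shows "dt / 2 * ((diff_energy N u 1 0 0 + diff_energy N u 0 1 0 + diff_energy N u 0 0 1) / (gridh N L)^2)
           - \<bar>\<theta>\<bar> * csum N (\<lambda>i j k. \<bar>\<phi>0 i j k\<bar>) \<le> energy N L \<epsilon> \<theta> dt \<phi>0 u"
proof -
  define \<psi> where "\<psi> = phase N L dt \<phi>0 u"
  have range: "\<And>i j k. (i,j,k) \<in> cells N \<Longrightarrow> \<bar>\<psi> i j k\<bar> \<le> 1"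
    using adm unfolding admissible_def \<psi>_def by blast
  have "0 \<le> csum N (\<lambda>i j k. entropy (\<psi> i j k))"
    by (intro csum_nonneg entropy_nonneg range)
  moreover have "\<bar>csum N (\<lambda>i j k. \<phi>0 i j k * \<psi> i j k)\<bar> \<le> csum N (\<lambda>i j k. \<bar>\<phi>0 i j k\<bar>) * 1"
    by (rule abs_csum_mult_le) (rule range)
  then have "\<bar>\<theta>\<bar> * \<bar>csum N (\<lambda>i j k. \<phi>0 i j k * \<psi> i j k)\<bar> \<le> \<bar>\<theta>\<bar> * csum N (\<lambda>i j k. \<bar>\<phi>0 i j k\<bar>)"
    by (intro mult_left_mono) auto
  then have "\<theta> * csum N (\<lambda>i j k. \<phi>0 i j k * \<psi> i j k) \<le> \<bar>\<theta>\<bar> * csum N (\<lambda>i j k. \<bar>\<phi>0 i j k\<bar>)"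
    using abs_ge_self[of "\<theta> * csum N (\<lambda>i j k. \<phi>0 i j k * \<psi> i j k)"] unfolding abs_mult by linarith
  moreover have "\<epsilon>^2 / 2 * csum N (\<lambda>i j k. \<psi> i j k * lap N L \<psi> i j k) \<le> 0"
    using csum_mult_lap_self_nonpos[OF phase_Cper[OF \<phi>0 u], of L] unfolding \<psi>_def
    by (simp add: mult_nonneg_nonpos)
  moreover have "dt / 2 * csum N (\<lambda>i j k. u i j k * lap N L u i j k) =
      - (dt / 2 * ((diff_energy N u 1 0 0 + diff_energy N u 0 1 0 + diff_energy N u 0 0 1) / (gridh N L)^2))"
    unfolding csum_mult_lap_self[OF u] minus_divide_left[symmetric] by (rule mult_minus_right)
  moreover have "energy N L \<epsilon> \<theta> dt \<phi>0 u = csum N (\<lambda>i j k. entropy (\<psi> i j k))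
      - \<theta> * csum N (\<lambda>i j k. \<phi>0 i j k * \<psi> i j k) - \<epsilon>^2 / 2 * csum N (\<lambda>i j k. \<psi> i j k * lap N L \<psi> i j k)
      - dt / 2 * csum N (\<lambda>i j k. u i j k * lap N L u i j k)"
    unfolding energy_def Let_def \<psi>_def ..
  ultimately show ?thesis by linarith
qed

lemma admissible_energy_tendsto:
  assumes adm: "\<And>n. admissible N L dt \<phi>0 (U n)" and lim: "\<And>i j k. (\<lambda>n. U n i j k) \<longlonglongrightarrow> u i j k"
  shows "admissible N L dt \<phi>0 u \<and> (\<lambda>n. energy N L \<epsilon> \<theta> dt \<phi>0 (U n)) \<longlonglongrightarrow> energy N L \<epsilon> \<theta> dt \<phi>0 u"
proof
  have \<psi>: "(\<lambda>n. phase N L dt \<phi>0 (U n) i j k) \<longlonglongrightarrow> phase N L dt \<phi>0 u i j k" for i j k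
    unfolding phase_def by (intro tendsto_intros lap_tendsto lim)
  have range: "\<bar>phase N L dt \<phi>0 (U n) i j k\<bar> \<le> 1" if "(i,j,k) \<in> cells N" for n i j k
    using adm that unfolding admissible_def by blast
  show adm_u: "admissible N L dt \<phi>0 u"
    unfolding admissible_def using LIMSEQ_le_const2[OF tendsto_rabs[OF \<psi>]] range by blast
  have "(\<lambda>n. entropy (phase N L dt \<phi>0 (U n) i j k)) \<longlonglongrightarrow> entropy (phase N L dt \<phi>0 u i j k)"
    if "(i,j,k) \<in> cells N" for i j k
    by (rule continuous_on_tendsto_compose[OF continuous_on_entropy \<psi>])
      (use range[OF that] adm_u that in \<open>auto simp: admissible_def abs_le_iff\<close>)
  then show "(\<lambda>n. energy N L \<epsilon> \<theta> dt \<phi>0 (U n)) \<longlonglongrightarrow> energy N L \<epsilon> \<theta> dt \<phi>0 u"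
    unfolding energy_def Let_def by (intro tendsto_intros csum_tendsto lap_tendsto \<psi> lim)
qed

text \<open>The constant phase equal to the mean of \<open>\<phi>\<^sup>n\<close> is admissible because that mean lies in
  \<open>(-1, 1)\<close>; the discrete Poisson problem provides the corresponding \<open>u\<close>.\<close>

lemma exists_admissible:
  assumes N: "N > 0" and L: "L > 0" and dt: "dt > 0" and \<phi>0: "\<phi>0 \<in> Cper N"
    and mean: "\<bar>csum N \<phi>0 / real N ^ 3\<bar> < 1"
  shows "\<exists>u\<in>Cper N. admissible N L dt \<phi>0 u"
proof -
  define m where "m = csum N \<phi>0 / real N ^ 3"
  define f where "f = (\<lambda>i j k. (m - \<phi>0 i j k) / dt)"
  have f: "f \<in> Cper N" unfolding f_def by (rule Cper_comp[OF \<phi>0])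
  have "csum N f = 0"
    unfolding f_def csum_divide csum_diff csum_const m_def using N by simp
  then obtain u where u: "u \<in> Cper N" "lap N L u = f"
    using poisson_solvable[OF N L f] by blast
  have "phase N L dt \<phi>0 u = (\<lambda>i j k. m)" unfolding phase_def u(2) f_def using dt by simp
  then have "admissible N L dt \<phi>0 u" unfolding admissible_def using mean m_def by auto
  then show ?thesis using u(1) by blast
qed

lemma energy_attains_min:
  assumes N: "N > 0" and L: "L > 0" and dt: "dt > 0" and \<phi>0: "\<phi>0 \<in> Cper N"
    and mean: "\<bar>csum N \<phi>0 / real N ^ 3\<bar> < 1"
  shows "\<exists>u. u \<in> Cper N \<and> admissible N L dt \<phi>0 u \<and>
           (\<forall>w. w \<in> Cper N \<longrightarrow> admissible N L dt \<phi>0 w \<longrightarrow> energy N L \<epsilon> \<theta> dt \<phi>0 u \<le> energy N L \<epsilon> \<theta> dt \<phi>0 w)"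
proof -
  obtain u0 where u0: "u0 \<in> Cper N" "admissible N L dt \<phi>0 u0"
    using exists_admissible[OF N L dt \<phi>0 mean] by blast
  define h where "h = gridh N L"
  have h: "h > 0" unfolding h_def using gridh_pos[OF L N] .
  define C where "C = energy N L \<epsilon> \<theta> dt \<phi>0 u0 + \<bar>\<theta>\<bar> * csum N (\<lambda>i j k. \<bar>\<phi>0 i j k\<bar>)"
  show ?thesis
  proof (rule Cper_attains_min[where Q="admissible N L dt \<phi>0" and J="energy N L \<epsilon> \<theta> dt \<phi>0" and v=u0
        and B="3 * real N * sqrt (2 * h^2 * C / dt)"])
    show "N > 0" "u0 \<in> Cper N" "admissible N L dt \<phi>0 u0" by (fact N u0)+
  next
    fix u :: grid and c :: real assume u: "u \<in> Cper N" "admissible N L dt \<phi>0 u"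
    then show "admissible N L dt \<phi>0 (\<lambda>i j k. u i j k + c) \<and>
        energy N L \<epsilon> \<theta> dt \<phi>0 (\<lambda>i j k. u i j k + c) = energy N L \<epsilon> \<theta> dt \<phi>0 u"
      unfolding admissible_def phase_add_const energy_add_const[OF u(1)] by simp
  next
    fix u :: grid and i j k
    assume u: "u \<in> Cper N" "admissible N L dt \<phi>0 u" "u 1 1 1 = 0"
      "energy N L \<epsilon> \<theta> dt \<phi>0 u \<le> energy N L \<epsilon> \<theta> dt \<phi>0 u0" and c: "(i,j,k) \<in> cells N"
    define E where "E = diff_energy N u 1 0 0 + diff_energy N u 0 1 0 + diff_energy N u 0 0 1"
    have "dt / 2 * (E / h^2) \<le> C"
      using energy_lower_bound[OF u(1) \<phi>0 u(2), where \<epsilon>=\<epsilon> and \<theta>=\<theta>] u(4) unfolding C_def E_def h_def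
      by linarith
    then have "E \<le> 2 * h^2 * C / dt" using h dt by (simp add: field_simps)
    then show "\<bar>u i j k\<bar> \<le> 3 * real N * sqrt (2 * h^2 * C / dt)"
      using abs_le_diff_energy[where u=u and N=N and E=E, OF u(3) _ c] unfolding E_def
      by (smt (verit) mult_left_mono of_nat_0_le_iff real_sqrt_le_iff)
  qed (rule admissible_energy_tendsto)
qed

section \<open>Minimizers stay away from the singular values \<open>\<plusminus>1\<close>\<close>

lemma periodic_closed_succ:
  fixes g :: "int \<Rightarrow> bool"
  assumes N: "N > 0" and per: "\<And>x. g (x + int N) = g x" and succ: "\<And>x. g x \<Longrightarrow> g (x + 1)"
    and "g a"
  shows "g x"
proof -
  have up: "g (a + int n)" for n
  proof (induction n)
    case (Suc n)
    then show ?case using succ[of "a + int n"] by (simp add: algebra_simps)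
  qed (use \<open>g a\<close> in simp)
  have "x = (a + int (nat ((x - a) mod int N))) + int N * ((x - a) div int N)"
    using mod_mult_div_eq[of "x - a" "int N"] N by simp
  then show ?thesis using periodic_add_mult[of g, OF per] up by metis
qed

lemma exists_saturation_boundary:
  assumes N: "N > 0" and \<psi>: "\<psi> \<in> Cper N" and c: "(i,j,k) \<in> cells N" "\<psi> i j k = 1"
    and mass: "csum N \<psi> < real N ^ 3"
  shows "\<exists>i0 j0 k0. (i0,j0,k0) \<in> cells N \<and> \<psi> i0 j0 k0 = 1 \<and>
           (\<psi> (i0+1) j0 k0 \<noteq> 1 \<or> \<psi> i0 (j0+1) k0 \<noteq> 1 \<or> \<psi> i0 j0 (k0+1) \<noteq> 1)"
proof (rule ccontr)
  assume "\<not> ?thesis"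
  then have closed_cells: "\<And>i j k. (i,j,k) \<in> cells N \<Longrightarrow> \<psi> i j k = 1 \<Longrightarrow>
       \<psi> (i+1) j k = 1 \<and> \<psi> i (j+1) k = 1 \<and> \<psi> i j (k+1) = 1" by blast
  have closed: "\<psi> (i+1) j k = 1 \<and> \<psi> i (j+1) k = 1 \<and> \<psi> i j (k+1) = 1" if "\<psi> i j k = 1" for i j k
    using closed_cells[OF cell_rep_cells[OF N, of i j k]] that
      Cper_cell_rep[OF \<psi>, of i j k] Cper_cell_rep[OF Cper_shift[OF \<psi>, of 1 0 0], of i j k]
      Cper_cell_rep[OF Cper_shift[OF \<psi>, of 0 1 0], of i j k] Cper_cell_rep[OF Cper_shift[OF \<psi>, of 0 0 1], of i j k]
    by simp
  note per = Cper_periodic[OF \<psi>]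
  have k_all: "\<psi> i j k' = 1" for k'
  proof (rule periodic_closed_succ[where g="\<lambda>k. \<psi> i j k = 1", OF N])
    show "\<And>x. (\<psi> i j (x + int N) = 1) = (\<psi> i j x = 1)" using per(3) by simp
  qed (use closed c(2) in blast)+
  have j_all: "\<forall>k. \<psi> i j' k = 1" for j'
  proof (rule periodic_closed_succ[where g="\<lambda>j. \<forall>k. \<psi> i j k = 1", OF N])
    show "\<And>x. (\<forall>k. \<psi> i (x + int N) k = 1) = (\<forall>k. \<psi> i x k = 1)" using per(2) by simp
  qed (use closed k_all in blast)+
  have all: "\<forall>j k. \<psi> i' j k = 1" for i'
  proof (rule periodic_closed_succ[where g="\<lambda>i. \<forall>j k. \<psi> i j k = 1", OF N])
    show "\<And>x. (\<forall>j k. \<psi> (x + int N) j k = 1) = (\<forall>j k. \<psi> x j k = 1)" using per(1) by simp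
  qed (use closed j_all in blast)+
  have "csum N \<psi> = csum N (\<lambda>i j k. 1)" by (rule csum_cong) (simp add: all)
  then show False using mass by (simp add: csum_const)
qed

lemma lap_indicator_sign:
  assumes v01: "\<And>i j k. v i j k = 0 \<or> v i j k = 1"
  shows "v i j k = 1 \<Longrightarrow> lap N L v i j k \<le> 0"
    and "v i j k = 0 \<Longrightarrow> 0 \<le> lap N L v i j k"
    and "gridh N L \<noteq> 0 \<Longrightarrow> v i j k = 1 \<Longrightarrow> v (i+1) j k = 0 \<or> v i (j+1) k = 0 \<or> v i j (k+1) = 0 \<Longrightarrow>
           lap N L v i j k < 0"
proof -
  define n where "n = v (i+1) j k + v (i-1) j k + v i (j+1) k + v i (j-1) k + v i j (k+1) + v i j (k-1)"
  have l: "lap N L v i j k = (n - 6 * v i j k) / (gridh N L)^2" unfolding lap_def n_def by simp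
  have b: "0 \<le> v p q r \<and> v p q r \<le> 1" for p q r using v01[of p q r] by auto
  have n: "0 \<le> n" "n \<le> 6" unfolding n_def using b by (smt (verit))+
  show "v i j k = 1 \<Longrightarrow> lap N L v i j k \<le> 0" "v i j k = 0 \<Longrightarrow> 0 \<le> lap N L v i j k"
    unfolding l using n by (simp_all add: divide_nonpos_nonneg)
  assume "gridh N L \<noteq> 0" "v i j k = 1" "v (i+1) j k = 0 \<or> v i (j+1) k = 0 \<or> v i j (k+1) = 0"
  moreover from this(3) have "n \<le> 5" using b unfolding n_def by (smt (verit))
  ultimately show "lap N L v i j k < 0" unfolding l by (simp add: divide_neg_pos)
qed

lemma exists_desaturating_direction:
  assumes N: "N > 0" and L: "L > 0" and \<psi>: "\<psi> \<in> Cper N"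
    and c: "(i,j,k) \<in> cells N" "\<psi> i j k = 1" and mass: "csum N \<psi> < real N ^ 3"
  shows "\<exists>v i0 j0 k0. v \<in> Cper N \<and> (i0,j0,k0) \<in> cells N \<and> \<psi> i0 j0 k0 = 1 \<and> lap N L v i0 j0 k0 < 0
           \<and> (\<forall>i j k. \<psi> i j k = 1 \<longrightarrow> lap N L v i j k \<le> 0) \<and> (\<forall>i j k. \<psi> i j k \<noteq> 1 \<longrightarrow> 0 \<le> lap N L v i j k)"
proof -
  obtain i0 j0 k0 where z: "(i0,j0,k0) \<in> cells N" "\<psi> i0 j0 k0 = 1"
      "\<psi> (i0+1) j0 k0 \<noteq> 1 \<or> \<psi> i0 (j0+1) k0 \<noteq> 1 \<or> \<psi> i0 j0 (k0+1) \<noteq> 1"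
    using exists_saturation_boundary[OF N \<psi> c mass] by blast
  define v where "v = (\<lambda>i j k. if \<psi> i j k = 1 then 1 else (0::real))"
  have v01: "\<And>i j k. v i j k = 0 \<or> v i j k = 1" unfolding v_def by simp
  note sign = lap_indicator_sign[where v=v and N=N and L=L, OF v01]
  have "v \<in> Cper N" unfolding v_def by (rule Cper_comp[OF \<psi>])
  moreover have "lap N L v i0 j0 k0 < 0"
    using sign(3)[of i0 j0 k0] gridh_pos[OF L N] z unfolding v_def by auto
  moreover have "\<forall>i j k. \<psi> i j k = 1 \<longrightarrow> lap N L v i j k \<le> 0" "\<forall>i j k. \<psi> i j k \<noteq> 1 \<longrightarrow> 0 \<le> lap N L v i j k"
    using sign(1,2) unfolding v_def by auto
  ultimately show ?thesis using z(1,2) by blast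
qed

lemma csum_entropy_descent:
  assumes z: "(i0,j0,k0) \<in> cells N" "\<psi> i0 j0 k0 = 1" "a i0 j0 k0 < 0"
    and range: "\<And>i j k. (i,j,k) \<in> cells N \<Longrightarrow> \<bar>\<psi> i j k\<bar> \<le> 1"
    and up: "\<And>i j k. \<psi> i j k = 1 \<Longrightarrow> a i j k \<le> 0"
    and down: "\<And>i j k. \<psi> i j k = -1 \<Longrightarrow> 0 \<le> a i j k"
  shows "\<exists>t>0. t \<le> 1 \<and> (\<forall>i j k. (i,j,k) \<in> cells N \<longrightarrow> \<bar>\<psi> i j k + t * a i j k\<bar> \<le> 1)
     \<and> csum N (\<lambda>i j k. entropy (\<psi> i j k + t * a i j k)) - csum N (\<lambda>i j k. entropy (\<psi> i j k)) < - B * t"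
proof -
  have "\<exists>t>0. t \<le> 1 \<and> (\<forall>p\<in>cells N. \<bar>(\<lambda>(i,j,k). \<psi> i j k) p + t * (\<lambda>(i,j,k). a i j k) p\<bar> \<le> 1)
      \<and> (\<Sum>p\<in>cells N. entropy ((\<lambda>(i,j,k). \<psi> i j k) p + t * (\<lambda>(i,j,k). a i j k) p)
                         - entropy ((\<lambda>(i,j,k). \<psi> i j k) p)) < - B * t"
    by (rule entropy_sum_descent[OF finite_cells z(1)]) (use z range up down in auto)
  then show ?thesis unfolding csum_def sum_subtractf[symmetric] by (fastforce simp: split_def)
qed

lemma linear_quadratic_le:
  fixes t B C :: real
  assumes "0 < t" "t \<le> 1"
  shows "- t * B + t^2 * C \<le> (\<bar>B\<bar> + \<bar>C\<bar>) * t"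
proof -
  have "- t * B \<le> t * \<bar>B\<bar>" using assms mult_left_mono[of "- B" "\<bar>B\<bar>" t] by simp
  moreover have "t^2 * C \<le> t^2 * \<bar>C\<bar>" by (rule mult_left_mono) auto
  moreover have "t^2 * \<bar>C\<bar> \<le> t * \<bar>C\<bar>"
    using assms by (intro mult_right_mono) (auto simp: power2_eq_square mult_left_le)
  ultimately show ?thesis by (simp add: algebra_simps)
qed

text \<open>If the minimizer touched \<open>1\<close>, moving along the desaturating direction would lower the
  entropy superlinearly (\<open>entropy_sum_descent\<close>) while the remaining terms of the energy change
  only linearly.\<close>

lemma minimizer_phase_lt_1:
  assumes N: "N > 0" and L: "L > 0" and dt: "dt > 0" and \<phi>0: "\<phi>0 \<in> Cper N"
    and mass: "csum N \<phi>0 < real N ^ 3"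
    and u: "u \<in> Cper N" "admissible N L dt \<phi>0 u"
    and min: "\<And>w. w \<in> Cper N \<Longrightarrow> admissible N L dt \<phi>0 w \<Longrightarrow> energy N L \<epsilon> \<theta> dt \<phi>0 u \<le> energy N L \<epsilon> \<theta> dt \<phi>0 w"
    and c: "(i,j,k) \<in> cells N"
  shows "phase N L dt \<phi>0 u i j k < 1"
proof (rule ccontr)
  assume not_lt: "\<not> phase N L dt \<phi>0 u i j k < 1"
  define \<psi> where "\<psi> = phase N L dt \<phi>0 u"
  have \<psi>: "\<psi> \<in> Cper N" unfolding \<psi>_def by (rule phase_Cper[OF \<phi>0 u(1)])
  have range: "\<And>i j k. (i,j,k) \<in> cells N \<Longrightarrow> \<bar>\<psi> i j k\<bar> \<le> 1"
    using u(2) unfolding admissible_def \<psi>_def by blast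
  have "\<psi> i j k = 1" using not_lt range[OF c] unfolding \<psi>_def by simp
  moreover have "csum N \<psi> < real N ^ 3" using csum_phase[OF u(1)] mass unfolding \<psi>_def by simp
  ultimately obtain v i0 j0 k0 where v: "v \<in> Cper N" and z: "(i0,j0,k0) \<in> cells N" "\<psi> i0 j0 k0 = 1"
      "lap N L v i0 j0 k0 < 0" and up: "\<And>i j k. \<psi> i j k = 1 \<Longrightarrow> lap N L v i j k \<le> 0"
      and down: "\<And>i j k. \<psi> i j k \<noteq> 1 \<Longrightarrow> 0 \<le> lap N L v i j k"
    using exists_desaturating_direction[OF N L \<psi> c] by blast
  define a where "a = (\<lambda>i j k. dt * lap N L v i j k)"
  define B1 where "B1 = csum N (\<lambda>i j k. (\<theta> * \<phi>0 i j k + \<epsilon>^2 * lap N L \<psi> i j k) * a i j k)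
      + dt * csum N (\<lambda>i j k. v i j k * lap N L u i j k)"
  obtain C where line: "\<And>t. energy N L \<epsilon> \<theta> dt \<phi>0 (\<lambda>i j k. u i j k + t * v i j k) = energy N L \<epsilon> \<theta> dt \<phi>0 u
      + (csum N (\<lambda>i j k. entropy (\<psi> i j k + t * a i j k)) - csum N (\<lambda>i j k. entropy (\<psi> i j k)))
      - t * B1 + t^2 * C"
    using energy_along_line[OF u(1) v \<phi>0, where \<epsilon>=\<epsilon> and \<theta>=\<theta>] unfolding \<psi>_def a_def B1_def by blast
  obtain t where t: "0 < t" "t \<le> 1"
    and inside: "\<And>i j k. (i,j,k) \<in> cells N \<Longrightarrow> \<bar>\<psi> i j k + t * a i j k\<bar> \<le> 1"
    and entropy_descent: "csum N (\<lambda>i j k. entropy (\<psi> i j k + t * a i j k)) - csum N (\<lambda>i j k. entropy (\<psi> i j k))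
      < - (\<bar>B1\<bar> + \<bar>C\<bar>) * t"
  proof -
    have "\<exists>t>0. t \<le> 1 \<and> (\<forall>i j k. (i,j,k) \<in> cells N \<longrightarrow> \<bar>\<psi> i j k + t * a i j k\<bar> \<le> 1)
      \<and> csum N (\<lambda>i j k. entropy (\<psi> i j k + t * a i j k)) - csum N (\<lambda>i j k. entropy (\<psi> i j k))
          < - (\<bar>B1\<bar> + \<bar>C\<bar>) * t"
      by (rule csum_entropy_descent[where \<psi>=\<psi> and a=a, OF z(1,2)])
        (use z(3) range up down dt in \<open>auto simp: a_def mult_pos_neg mult_nonneg_nonpos\<close>)
    then show ?thesis using that by blast
  qed
  have "admissible N L dt \<phi>0 (\<lambda>i j k. u i j k + t * v i j k)"
    unfolding admissible_def phase_add_scaled using inside unfolding \<psi>_def a_def by fastforce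
  then have "energy N L \<epsilon> \<theta> dt \<phi>0 u \<le> energy N L \<epsilon> \<theta> dt \<phi>0 (\<lambda>i j k. u i j k + t * v i j k)"
    by (rule min[OF Cper_add_scaled[OF u(1) v]])
  moreover have "- t * B1 + t^2 * C \<le> (\<bar>B1\<bar> + \<bar>C\<bar>) * t" by (rule linear_quadratic_le[OF t])
  ultimately show False using entropy_descent line[of t] by (simp add: algebra_simps)
qed

lemma minimizer_phase_gt_minus_1:
  assumes N: "N > 0" and L: "L > 0" and dt: "dt > 0" and \<phi>0: "\<phi>0 \<in> Cper N"
    and mass: "- (real N ^ 3) < csum N \<phi>0"
    and u: "u \<in> Cper N" "admissible N L dt \<phi>0 u"
    and min: "\<And>w. w \<in> Cper N \<Longrightarrow> admissible N L dt \<phi>0 w \<Longrightarrow> energy N L \<epsilon> \<theta> dt \<phi>0 u \<le> energy N L \<epsilon> \<theta> dt \<phi>0 w"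
    and c: "(i,j,k) \<in> cells N"
  shows "-1 < phase N L dt \<phi>0 u i j k"
proof -
  let ?\<phi>0' = "\<lambda>i j k. - \<phi>0 i j k" and ?u' = "\<lambda>i j k. - u i j k"
  have "phase N L dt ?\<phi>0' ?u' i j k < 1"
  proof (rule minimizer_phase_lt_1[OF N L dt _ _ _ _ _ c, where \<epsilon>=\<epsilon> and \<theta>=\<theta>])
    show "?\<phi>0' \<in> Cper N" "?u' \<in> Cper N" by (fact Cper_comp[OF \<phi>0] Cper_comp[OF u(1)])+
    show "csum N ?\<phi>0' < real N ^ 3" using mass by (simp add: csum_uminus)
    show "admissible N L dt ?\<phi>0' ?u'" using u(2) by (simp add: admissible_uminus)
  next
    fix w assume w: "w \<in> Cper N" "admissible N L dt ?\<phi>0' w"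
    have w': "(\<lambda>i j k. - w i j k) \<in> Cper N" "admissible N L dt \<phi>0 (\<lambda>i j k. - w i j k)"
      using Cper_comp[OF w(1)] w(2) admissible_uminus[of N L dt \<phi>0 "\<lambda>i j k. - w i j k"] by simp_all
    show "energy N L \<epsilon> \<theta> dt ?\<phi>0' ?u' \<le> energy N L \<epsilon> \<theta> dt ?\<phi>0' w"
      using min[OF w'] energy_uminus[of N L \<epsilon> \<theta> dt \<phi>0 u] energy_uminus[of N L \<epsilon> \<theta> dt \<phi>0 "\<lambda>i j k. - w i j k"]
      by simp
  qed
  then show ?thesis unfolding phase_uminus by simp
qed

section \<open>Stationarity and uniqueness\<close>

lemma has_real_derivative_csum_entropy:
  assumes "\<And>i j k. (i,j,k) \<in> cells N \<Longrightarrow> \<bar>\<psi> i j k\<bar> < 1"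
  shows "((\<lambda>t. csum N (\<lambda>i j k. entropy (\<psi> i j k + t * a i j k))) has_real_derivative
           csum N (\<lambda>i j k. entropy_deriv (\<psi> i j k) * a i j k)) (at 0)"
  unfolding csum_def
proof (rule DERIV_sum, clarsimp split: prod.splits)
  fix i j k assume "(i,j,k) \<in> cells N"
  then have "(entropy has_real_derivative entropy_deriv (\<psi> i j k)) (at (\<psi> i j k + 0 * a i j k))"
    using has_real_derivative_entropy[OF assms] by simp
  moreover have "((\<lambda>t. \<psi> i j k + t * a i j k) has_real_derivative a i j k) (at 0)"
    by (auto intro!: derivative_eq_intros)
  ultimately show "((\<lambda>t. entropy (\<psi> i j k + t * a i j k)) has_real_derivative
      entropy_deriv (\<psi> i j k) * a i j k) (at 0)"
    by (rule DERIV_chain2)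
qed

lemma interior_along_line:
  fixes \<psi> a :: "'p \<Rightarrow> real"
  assumes "finite I" and "\<And>x. x \<in> I \<Longrightarrow> \<bar>\<psi> x\<bar> < 1"
  shows "\<exists>d>0. \<forall>t. \<bar>t\<bar> < d \<longrightarrow> (\<forall>x\<in>I. \<bar>\<psi> x + t * a x\<bar> < 1)"
proof -
  have "\<forall>\<^sub>F t in at 0. \<bar>\<psi> x + t * a x\<bar> < 1" if "x \<in> I" for x
  proof -
    have "((\<lambda>t. \<bar>\<psi> x + t * a x\<bar>) \<longlongrightarrow> \<bar>\<psi> x\<bar>) (at 0)" by (auto intro!: tendsto_eq_intros)
    then show ?thesis using order_tendstoD(2) assms(2)[OF that] by blast
  qed
  then have "\<forall>\<^sub>F t in at 0. \<forall>x\<in>I. \<bar>\<psi> x + t * a x\<bar> < 1"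
    by (rule eventually_ball_finite[OF assms(1), rule_format])
  then obtain d where "d > 0" "\<And>t. t \<noteq> 0 \<Longrightarrow> \<bar>t\<bar> < d \<Longrightarrow> \<forall>x\<in>I. \<bar>\<psi> x + t * a x\<bar> < 1"
    unfolding eventually_at by (auto simp: dist_real_def)
  then show ?thesis using assms(2) by (metis add_0_right mult_zero_left)
qed

definition chem_pot :: "nat \<Rightarrow> real \<Rightarrow> real \<Rightarrow> real \<Rightarrow> grid \<Rightarrow> grid \<Rightarrow> grid" where
  "chem_pot N L \<epsilon> \<theta> \<phi>0 \<phi> = (\<lambda>i j k. entropy_deriv (\<phi> i j k) - \<theta> * \<phi>0 i j k - \<epsilon>^2 * lap N L \<phi> i j k)"

lemma chem_pot_Cper:
  assumes "\<phi>0 \<in> Cper N" "\<phi> \<in> Cper N"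
  shows "chem_pot N L \<epsilon> \<theta> \<phi>0 \<phi> \<in> Cper N"
  using Cper_periodic[OF assms(1)] Cper_periodic[OF assms(2)] Cper_periodic[OF lap_Cper[OF assms(2)]]
  unfolding Cper_def chem_pot_def by simp

lemma has_real_derivative_energy_along_line:
  assumes u: "u \<in> Cper N" and v: "v \<in> Cper N" and \<phi>0: "\<phi>0 \<in> Cper N"
    and interior: "\<And>i j k. (i,j,k) \<in> cells N \<Longrightarrow> \<bar>phase N L dt \<phi>0 u i j k\<bar> < 1"
  shows "((\<lambda>t. energy N L \<epsilon> \<theta> dt \<phi>0 (\<lambda>i j k. u i j k + t * v i j k)) has_real_derivative
           dt * (csum N (\<lambda>i j k. v i j k * lap N L (chem_pot N L \<epsilon> \<theta> \<phi>0 (phase N L dt \<phi>0 u)) i j k)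
                 - csum N (\<lambda>i j k. v i j k * lap N L u i j k))) (at 0)"
proof -
  define \<psi> where "\<psi> = phase N L dt \<phi>0 u"
  define \<mu> where "\<mu> = chem_pot N L \<epsilon> \<theta> \<phi>0 \<psi>"
  have \<mu>: "\<mu> \<in> Cper N" unfolding \<mu>_def \<psi>_def by (rule chem_pot_Cper[OF \<phi>0 phase_Cper[OF \<phi>0 u]])
  define a where "a = (\<lambda>i j k. dt * lap N L v i j k)"
  define B1 where "B1 = csum N (\<lambda>i j k. (\<theta> * \<phi>0 i j k + \<epsilon>^2 * lap N L \<psi> i j k) * a i j k)
      + dt * csum N (\<lambda>i j k. v i j k * lap N L u i j k)"
  obtain C where line: "\<And>t. energy N L \<epsilon> \<theta> dt \<phi>0 (\<lambda>i j k. u i j k + t * v i j k) = energy N L \<epsilon> \<theta> dt \<phi>0 u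
      + (csum N (\<lambda>i j k. entropy (\<psi> i j k + t * a i j k)) - csum N (\<lambda>i j k. entropy (\<psi> i j k)))
      - t * B1 + t^2 * C"
    using energy_along_line[OF u v \<phi>0, where \<epsilon>=\<epsilon> and \<theta>=\<theta>] unfolding \<psi>_def a_def B1_def by blast
  have deriv: "((\<lambda>t. energy N L \<epsilon> \<theta> dt \<phi>0 (\<lambda>i j k. u i j k + t * v i j k)) has_real_derivative
      csum N (\<lambda>i j k. entropy_deriv (\<psi> i j k) * a i j k) - B1) (at 0)"
    unfolding line by (auto intro!: derivative_eq_intros has_real_derivative_csum_entropy interior simp: \<psi>_def)
  have "csum N (\<lambda>i j k. entropy_deriv (\<psi> i j k) * a i j k)
      - csum N (\<lambda>i j k. (\<theta> * \<phi>0 i j k + \<epsilon>^2 * lap N L \<psi> i j k) * a i j k) = csum N (\<lambda>i j k. \<mu> i j k * a i j k)"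
    unfolding csum_diff[symmetric] by (rule csum_cong) (simp add: \<mu>_def chem_pot_def algebra_simps)
  also have "\<dots> = dt * csum N (\<lambda>i j k. v i j k * lap N L \<mu> i j k)"
    unfolding a_def csum_mult_lap_sym[OF \<mu> v, symmetric] csum_cmult[symmetric] by (simp add: algebra_simps)
  finally have "csum N (\<lambda>i j k. entropy_deriv (\<psi> i j k) * a i j k) - B1 =
      dt * (csum N (\<lambda>i j k. v i j k * lap N L \<mu> i j k) - csum N (\<lambda>i j k. v i j k * lap N L u i j k))"
    unfolding B1_def right_diff_distrib by linarith
  with deriv show ?thesis unfolding \<mu>_def \<psi>_def by simp
qed

text \<open>At an interior minimizer the derivative vanishes in every direction; the direction
  \<open>v = \<Delta>\<^sub>h \<mu> - \<Delta>\<^sub>h u\<close> turns it into \<open>\<Delta>t \<parallel>v\<parallel>\<^sup>2\<close>.\<close>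

lemma minimizer_lap_chem_pot:
  assumes N: "N > 0" and dt: "dt > 0" and \<phi>0: "\<phi>0 \<in> Cper N" and u: "u \<in> Cper N"
    and min: "\<And>w. w \<in> Cper N \<Longrightarrow> admissible N L dt \<phi>0 w \<Longrightarrow> energy N L \<epsilon> \<theta> dt \<phi>0 u \<le> energy N L \<epsilon> \<theta> dt \<phi>0 w"
    and interior: "\<And>i j k. (i,j,k) \<in> cells N \<Longrightarrow> \<bar>phase N L dt \<phi>0 u i j k\<bar> < 1"
  shows "lap N L (chem_pot N L \<epsilon> \<theta> \<phi>0 (phase N L dt \<phi>0 u)) = lap N L u"
proof -
  define \<mu> where "\<mu> = chem_pot N L \<epsilon> \<theta> \<phi>0 (phase N L dt \<phi>0 u)"
  have \<mu>: "\<mu> \<in> Cper N" unfolding \<mu>_def by (rule chem_pot_Cper[OF \<phi>0 phase_Cper[OF \<phi>0 u]])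
  define v where "v = (\<lambda>i j k. lap N L \<mu> i j k - lap N L u i j k)"
  have v: "v \<in> Cper N" unfolding v_def by (rule Cper_comp2[OF lap_Cper[OF \<mu>] lap_Cper[OF u]])
  define a where "a = (\<lambda>i j k. dt * lap N L v i j k)"
  obtain d where d: "d > 0"
    "\<And>t. \<bar>t\<bar> < d \<Longrightarrow> \<forall>p\<in>cells N. \<bar>(\<lambda>(i,j,k). phase N L dt \<phi>0 u i j k) p + t * (\<lambda>(i,j,k). a i j k) p\<bar> < 1"
    using interior_along_line[OF finite_cells, of N "\<lambda>(i,j,k). phase N L dt \<phi>0 u i j k" "\<lambda>(i,j,k). a i j k"]
      interior by fastforce
  have deriv: "((\<lambda>t. energy N L \<epsilon> \<theta> dt \<phi>0 (\<lambda>i j k. u i j k + t * v i j k)) has_real_derivative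
      dt * (csum N (\<lambda>i j k. v i j k * lap N L \<mu> i j k) - csum N (\<lambda>i j k. v i j k * lap N L u i j k))) (at 0)"
    unfolding \<mu>_def by (rule has_real_derivative_energy_along_line[OF u v \<phi>0]) (rule interior)
  have "dt * (csum N (\<lambda>i j k. v i j k * lap N L \<mu> i j k) - csum N (\<lambda>i j k. v i j k * lap N L u i j k)) = 0"
  proof (rule DERIV_local_min[OF deriv d(1)], intro allI impI)
    fix t :: real assume "\<bar>0 - t\<bar> < d"
    then have "admissible N L dt \<phi>0 (\<lambda>i j k. u i j k + t * v i j k)"
      using d(2)[of t] unfolding admissible_def phase_add_scaled a_def by fastforce
    then show "energy N L \<epsilon> \<theta> dt \<phi>0 (\<lambda>i j k. u i j k + 0 * v i j k) \<le> energy N L \<epsilon> \<theta> dt \<phi>0 (\<lambda>i j k. u i j k + t * v i j k)"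
      using min[OF Cper_add_scaled[OF u v]] by simp
  qed
  moreover have "csum N (\<lambda>i j k. v i j k * lap N L \<mu> i j k) - csum N (\<lambda>i j k. v i j k * lap N L u i j k)
      = csum N (\<lambda>i j k. (v i j k)^2)"
    unfolding csum_diff[symmetric] by (rule csum_cong) (simp add: v_def power2_eq_square algebra_simps)
  ultimately have "\<And>i j k. (i,j,k) \<in> cells N \<Longrightarrow> v i j k = 0"
    using dt csum_sq_eq_0_imp[of N v] by simp
  then have "v = (\<lambda>i j k. 0)" by (rule Cper_eqI[OF v Cper_const N])
  then have "\<forall>i j k. lap N L \<mu> i j k - lap N L u i j k = 0" unfolding v_def by meson
  then show ?thesis unfolding \<mu>_def[symmetric] by (auto intro!: ext)
qed

lemma scheme_D:
  assumes "scheme N L \<epsilon> \<theta> dt \<phi>0 \<phi>1 \<mu>1" "dt > 0"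
  shows "\<phi>1 i j k = \<phi>0 i j k + dt * lap N L \<mu>1 i j k"
    and "\<mu>1 i j k = entropy_deriv (\<phi>1 i j k) - \<theta> * \<phi>0 i j k - \<epsilon>^2 * lap N L \<phi>1 i j k"
  using assms unfolding scheme_def entropy_deriv_def by (auto simp: field_simps)

text \<open>Uniqueness: for the differences \<open>e\<close> of two solutions and \<open>m\<close> of their chemical potentials,
  \<open>\<langle>e, m\<rangle> = \<Delta>t \<langle>m, \<Delta>\<^sub>h m\<rangle> \<le> 0\<close>, while \<open>\<langle>e, m\<rangle> \<ge> \<langle>e, entropy_deriv \<phi>\<^sub>a - entropy_deriv \<phi>\<^sub>b\<rangle>\<close>
  is nonnegative and vanishes only for \<open>e = 0\<close>, by strict monotonicity of \<open>entropy_deriv\<close>.\<close>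

lemma scheme_solution_unique:
  assumes N: "N > 0" and dt: "dt > 0"
    and a: "\<phi>a \<in> Cper N" "\<mu>a \<in> Cper N" "scheme N L \<epsilon> \<theta> dt \<phi>0 \<phi>a \<mu>a"
      "\<And>i j k. (i,j,k) \<in> cells N \<Longrightarrow> \<bar>\<phi>a i j k\<bar> < 1"
    and b: "\<phi>b \<in> Cper N" "\<mu>b \<in> Cper N" "scheme N L \<epsilon> \<theta> dt \<phi>0 \<phi>b \<mu>b"
      "\<And>i j k. (i,j,k) \<in> cells N \<Longrightarrow> \<bar>\<phi>b i j k\<bar> < 1"
  shows "\<phi>a = \<phi>b"
proof -
  define e where "e = (\<lambda>i j k. \<phi>a i j k - \<phi>b i j k)"
  define m where "m = (\<lambda>i j k. \<mu>a i j k - \<mu>b i j k)"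
  define T where "T = (\<lambda>i j k. e i j k * (entropy_deriv (\<phi>a i j k) - entropy_deriv (\<phi>b i j k)))"
  have e: "e \<in> Cper N" unfolding e_def by (rule Cper_comp2[OF a(1) b(1)])
  have m: "m \<in> Cper N" unfolding m_def by (rule Cper_comp2[OF a(2) b(2)])
  have T: "0 \<le> T i j k" "\<phi>a i j k \<noteq> \<phi>b i j k \<Longrightarrow> 0 < T i j k" if "(i,j,k) \<in> cells N" for i j k
    unfolding T_def e_def using entropy_deriv_monotone[OF a(4)[OF that] b(4)[OF that]] by auto
  have "csum N (\<lambda>i j k. e i j k * m i j k) = dt * csum N (\<lambda>i j k. m i j k * lap N L m i j k)"
    unfolding csum_cmult[symmetric] e_def m_def lap_diff
    by (rule csum_cong) (simp add: scheme_D(1)[OF a(3) dt] scheme_D(1)[OF b(3) dt] algebra_simps)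
  also have "\<dots> \<le> 0" using csum_mult_lap_self_nonpos[OF m, of L] dt by (simp add: mult_nonneg_nonpos)
  finally have "csum N (\<lambda>i j k. e i j k * m i j k) \<le> 0" .
  moreover have "csum N (\<lambda>i j k. e i j k * m i j k) = csum N T - \<epsilon>^2 * csum N (\<lambda>i j k. e i j k * lap N L e i j k)"
    unfolding csum_cmult[symmetric] csum_diff[symmetric] T_def m_def e_def lap_diff
    by (rule csum_cong) (simp add: scheme_D(2)[OF a(3) dt] scheme_D(2)[OF b(3) dt] algebra_simps)
  moreover have "\<epsilon>^2 * csum N (\<lambda>i j k. e i j k * lap N L e i j k) \<le> 0"
    using csum_mult_lap_self_nonpos[OF e, of L] by (simp add: mult_nonneg_nonpos)
  ultimately have "csum N T \<le> 0" by linarith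
  then have "\<phi>a i j k = \<phi>b i j k" if "(i,j,k) \<in> cells N" for i j k
    using T[OF that] member_le_csum[of N T, OF T(1) that] by fastforce
  then show ?thesis by (rule Cper_eqI[OF a(1) b(1) N])
qed

lemma scheme_solution_exists:
  assumes N: "N > 0" and L: "L > 0" and dt: "dt > 0" and \<phi>0: "\<phi>0 \<in> Cper N"
    and mean: "\<bar>csum N \<phi>0 / real N ^ 3\<bar> < 1"
  shows "\<exists>\<phi>1 \<mu>1. \<phi>1 \<in> Cper N \<and> \<mu>1 \<in> Cper N \<and> scheme N L \<epsilon> \<theta> dt \<phi>0 \<phi>1 \<mu>1
           \<and> csum N \<phi>1 = csum N \<phi>0 \<and> (\<forall>i j k. (i,j,k) \<in> cells N \<longrightarrow> \<bar>\<phi>1 i j k\<bar> < 1)"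
proof -
  obtain u where u: "u \<in> Cper N" "admissible N L dt \<phi>0 u"
    and min: "\<And>w. w \<in> Cper N \<Longrightarrow> admissible N L dt \<phi>0 w \<Longrightarrow> energy N L \<epsilon> \<theta> dt \<phi>0 u \<le> energy N L \<epsilon> \<theta> dt \<phi>0 w"
    using energy_attains_min[OF N L dt \<phi>0 mean, where \<epsilon>=\<epsilon> and \<theta>=\<theta>] by blast
  define \<psi> where "\<psi> = phase N L dt \<phi>0 u"
  define \<mu> where "\<mu> = chem_pot N L \<epsilon> \<theta> \<phi>0 \<psi>"
  have \<psi>: "\<psi> \<in> Cper N" unfolding \<psi>_def by (rule phase_Cper[OF \<phi>0 u(1)])
  have "- (real N ^ 3) < csum N \<phi>0" "csum N \<phi>0 < real N ^ 3"
    using mean N by (simp_all add: abs_less_iff field_simps)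
  then have interior: "\<bar>phase N L dt \<phi>0 u i j k\<bar> < 1" if "(i,j,k) \<in> cells N" for i j k
    using minimizer_phase_lt_1[OF N L dt \<phi>0 _ u min that] minimizer_phase_gt_minus_1[OF N L dt \<phi>0 _ u min that]
    by auto
  have "lap N L \<mu> = lap N L u"
    unfolding \<mu>_def \<psi>_def by (rule minimizer_lap_chem_pot[OF N dt \<phi>0 u(1)]) (fact min, rule interior)
  then have "scheme N L \<epsilon> \<theta> dt \<phi>0 \<psi> \<mu>"
    unfolding scheme_def using dt by (simp add: \<psi>_def phase_def \<mu>_def chem_pot_def entropy_deriv_def)
  moreover have "\<mu> \<in> Cper N" unfolding \<mu>_def by (rule chem_pot_Cper[OF \<phi>0 \<psi>])
  moreover have "csum N \<psi> = csum N \<phi>0" unfolding \<psi>_def by (rule csum_phase[OF u(1)])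
  ultimately show ?thesis using \<psi> interior unfolding \<psi>_def by blast
qed

lemma gmean_eq_csum: "L > 0 \<Longrightarrow> N > 0 \<Longrightarrow> gmean N L \<nu> = csum N \<nu> / real N ^ 3"
  unfolding gmean_def ip_def gridh_def csum_def by (simp add: split_def field_simps)

lemma supnorm_less_1_iff:
  assumes "N > 0"
  shows "supnorm N \<nu> < 1 \<longleftrightarrow> (\<forall>i j k. (i,j,k) \<in> cells N \<longrightarrow> \<bar>\<nu> i j k\<bar> < 1)"
  unfolding supnorm_def using finite_cells cells_nonempty[OF assms] by auto

theorem theorem2p3:
  fixes N :: nat and L \<epsilon> \<theta>\<^sub>0 dt M :: real and \<phi>0 :: grid
  assumes "L > 0" and "N > 0" and "\<epsilon> > 0" and "\<theta>\<^sub>0 > 0" and "dt > 0" and "M > 0"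
    and "\<phi>0 \<in> Cper N"
    and "supnorm N \<phi>0 \<le> M"
    and "\<bar>gmean N L \<phi>0\<bar> < 1"
  shows "\<exists>!\<phi>1. \<phi>1 \<in> Cper N \<and> (\<exists>\<mu>1 \<in> Cper N. scheme N L \<epsilon> \<theta>\<^sub>0 dt \<phi>0 \<phi>1 \<mu>1)
            \<and> (\<lambda>i j k. \<phi>1 i j k - gmean N L \<phi>0) \<in> Cper0 N L
            \<and> supnorm N \<phi>1 < 1"
proof -
  note L = assms(1) and N = assms(2) and dt = assms(5) and \<phi>0 = assms(7)
  note gmean = gmean_eq_csum[OF L N]
  obtain \<phi>1 \<mu>1 where \<phi>1: "\<phi>1 \<in> Cper N" "\<mu>1 \<in> Cper N" "scheme N L \<epsilon> \<theta>\<^sub>0 dt \<phi>0 \<phi>1 \<mu>1"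
      "csum N \<phi>1 = csum N \<phi>0" "\<forall>i j k. (i,j,k) \<in> cells N \<longrightarrow> \<bar>\<phi>1 i j k\<bar> < 1"
    using scheme_solution_exists[OF N L dt \<phi>0] assms(9) unfolding gmean by blast
  have "(\<lambda>i j k. \<phi>1 i j k - gmean N L \<phi>0) \<in> Cper0 N L"
    unfolding Cper0_def using Cper_comp[OF \<phi>1(1)] N
    by (simp add: gmean csum_diff csum_const \<phi>1(4))
  then show ?thesis
    using \<phi>1 scheme_solution_unique[OF N dt] supnorm_less_1_iff[OF N] by (intro ex1I[of _ \<phi>1]) blast+
qed

end
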